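(* Let $\boldsymbol{M}$ be a weight sequence satisfying $\operatorname{(sm)}$, and let $\boldsymbol{A}$ be either an almost increasing sequence, or a sequence such that $\liminf_{p\to\infty}A_p^{1/p}>0$ and $\widehat{\boldsymbol{A}}$ satisfies $\operatorname{(alg)}$. Then: (i) There exists $a>0$ such that for every $h\ge1$ one has $\mathcal{F}(\mathcal{S}^{\widehat{\boldsymbol{A}},h}_{\boldsymbol{M},h}(\mathbb{R}))\subset\mathcal{S}^{\boldsymbol{M}_{+1},ah}_{\widehat{\boldsymbol{A}},ah}(\mathbb{R})$, and $\mathcal{F}\colon\mathcal{S}^{\widehat{\boldsymbol{A}},h}_{\boldsymbol{M},h}(\mathbb{R})\to\mathcal{S}^{\boldsymbol{M}_{+1},ah}_{\widehat{\boldsymbol{A}},ah}(\mathbb{R})$ is continuous. (ii) $\mathcal{F}(\mathcal{S}^{\{\widehat{\boldsymbol{A}}\}}_{\{\boldsymbol{M}\}}(\mathbb{R}))\subset\mathcal{S}^{\{\boldsymbol{M}_{+1}\}}_{\{\widehat{\boldsymbol{A}}\}}(\mathbb{R})$ and $\mathcal{F}\colon\mathcal{S}^{\{\widehat{\boldsymbol{A}}\}}_{\{\boldsymbol{M}\}}(\mathbb{R})\to\mathcal{S}^{\{\boldsymbol{M}_{+1}\}}_{\{\widehat{\boldsymbol{A}}\}}(\mathbb{R})$ is continuous. (iii) Statements (i) and (ii) remain valid when $\mathcal{F}$ is replaced by $\mathcal{F}^{-1}$.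
   Context: Sequences are of positive reals indexed by $\mathbb{N}_0$; $m_p=M_{p+1}/M_p$. Weight sequence: $M_0=1$, $M_p^2\le M_{p-1}M_{p+1}$ ($p\ge1$), $m_p\to\infty$. $\operatorname{(sm)}$: $\log(m_{p+1}/m_p)\le C_0H^{p+1}$ for all $p$, some $C_0>0$, $H>1$. $\operatorname{(alg)}$ for $\boldsymbol{N}$: $N_pN_q\le C_1^{p+q}N_{p+q}$ for all $p,q$, some $C_1\ge1$. Almost increasing: $A_p\le aA_q$ for all $q\ge p$, some $a>0$. $\widehat{\boldsymbol{A}}=(p!A_p)_p$, $\boldsymbol{M}_{+1}=(M_{p+1})_p$. For sequences $\boldsymbol{N},\boldsymbol{B}$ and $h>0$, $\mathcal{S}^{\boldsymbol{B},h}_{\boldsymbol{N},h}(\mathbb{R})$ is the Banach space of $\varphi\in C^\infty(\mathbb{R})$ with norm $\sup_{p,q\in\mathbb{N}_0}\sup_{x\in\mathbb{R}}|x^p\varphi^{(q)}(x)|/(h^{p+q}N_pB_q)<\infty$, and $\mathcal{S}^{\{\boldsymbol{B}\}}_{\{\boldsymbol{N}\}}(\mathbb{R})=\bigcup_{h>0}\mathcal{S}^{\boldsymbol{B},h}_{\boldsymbol{N},h}(\mathbb{R})$ with the inductive limit topology. $\mathcal{F}(\varphi)(\xi)=\int_{-\infty}^\infty\varphi(x)e^{ix\xi}\,dx$, and $\mathcal{F}^{-1}(\varphi)(\xi)=\frac1{2\pi}\mathcal{F}(\varphi)(-\xi)$. *)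

theory Defs
  imports "HOL-Analysis.Analysis"
begin

definition quot_seq :: "(nat \<Rightarrow> real) \<Rightarrow> nat \<Rightarrow> real" where
  "quot_seq M p = M (Suc p) / M p"

definition weight_sequence :: "(nat \<Rightarrow> real) \<Rightarrow> bool" where
  "weight_sequence M \<longleftrightarrow> (\<forall>p. M p > 0) \<and> M 0 = 1 \<and>
     (\<forall>p\<ge>1. (M p)^2 \<le> M (p - 1) * M (p + 1)) \<and>
     filterlim (quot_seq M) at_top sequentially"

definition cond_sm :: "(nat \<Rightarrow> real) \<Rightarrow> bool" where
  "cond_sm M \<longleftrightarrow> (\<exists>C0 H. C0 > 0 \<and> H > 1 \<and>
     (\<forall>p. ln (quot_seq M (p + 1) / quot_seq M p) \<le> C0 * H ^ (p + 1)))"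

definition cond_alg :: "(nat \<Rightarrow> real) \<Rightarrow> bool" where
  "cond_alg N \<longleftrightarrow> (\<exists>C1\<ge>1. \<forall>p q. N p * N q \<le> C1 ^ (p + q) * N (p + q))"

definition almost_increasing :: "(nat \<Rightarrow> real) \<Rightarrow> bool" where
  "almost_increasing A \<longleftrightarrow> (\<exists>a>0. \<forall>p q. p \<le> q \<longrightarrow> A p \<le> a * A q)"

definition hat_seq :: "(nat \<Rightarrow> real) \<Rightarrow> nat \<Rightarrow> real" where
  "hat_seq A p = fact p * A p"

definition shift1 :: "(nat \<Rightarrow> real) \<Rightarrow> nat \<Rightarrow> real" where
  "shift1 M p = M (p + 1)"

fun vder :: "(real \<Rightarrow> complex) \<Rightarrow> nat \<Rightarrow> real \<Rightarrow> complex" where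
  "vder f 0 = f"
| "vder f (Suc k) = (\<lambda>x. vector_derivative (vder f k) (at x))"

definition smooth_fun :: "(real \<Rightarrow> complex) \<Rightarrow> bool" where
  "smooth_fun f \<longleftrightarrow> (\<forall>k x. vder f k differentiable (at x))"

definition S_vals :: "(nat \<Rightarrow> real) \<Rightarrow> (nat \<Rightarrow> real) \<Rightarrow> real \<Rightarrow> (real \<Rightarrow> complex) \<Rightarrow> real set" where
  "S_vals N B h f = {norm (complex_of_real (x ^ p) * vder f q x) / (h ^ (p + q) * N p * B q)
                     | p q x. True}"

definition S_norm :: "(nat \<Rightarrow> real) \<Rightarrow> (nat \<Rightarrow> real) \<Rightarrow> real \<Rightarrow> (real \<Rightarrow> complex) \<Rightarrow> real" where
  "S_norm N B h f = Sup (S_vals N B h f)"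

text \<open>The Banach space S^{B,h}_{N,h}(R) (N weights x^p, B weights derivatives).\<close>
definition S_space :: "(nat \<Rightarrow> real) \<Rightarrow> (nat \<Rightarrow> real) \<Rightarrow> real \<Rightarrow> (real \<Rightarrow> complex) set" where
  "S_space N B h = {f. smooth_fun f \<and> bdd_above (S_vals N B h f)}"

definition S_top :: "(nat \<Rightarrow> real) \<Rightarrow> (nat \<Rightarrow> real) \<Rightarrow> real \<Rightarrow> (real \<Rightarrow> complex) topology" where
  "S_top N B h = topology (\<lambda>U. U \<subseteq> S_space N B h \<and>
     (\<forall>f\<in>U. \<exists>e>0. {g \<in> S_space N B h. S_norm N B h (\<lambda>x. g x - f x) < e} \<subseteq> U))"

definition S_ind :: "(nat \<Rightarrow> real) \<Rightarrow> (nat \<Rightarrow> real) \<Rightarrow> (real \<Rightarrow> complex) set" where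
  "S_ind N B = (\<Union>h\<in>{0<..}. S_space N B h)"

text \<open>Seminorms on the union whose restrictions to every step are continuous; they
  generate the (locally convex) inductive limit topology.\<close>
definition ind_seminorm :: "(nat \<Rightarrow> real) \<Rightarrow> (nat \<Rightarrow> real) \<Rightarrow> ((real \<Rightarrow> complex) \<Rightarrow> real) \<Rightarrow> bool" where
  "ind_seminorm N B s \<longleftrightarrow>
     (\<forall>f\<in>S_ind N B. s f \<ge> 0) \<and>
     (\<forall>f\<in>S_ind N B. \<forall>g\<in>S_ind N B. s (\<lambda>x. f x + g x) \<le> s f + s g) \<and>
     (\<forall>f\<in>S_ind N B. \<forall>c::complex. s (\<lambda>x. c * f x) = norm c * s f) \<and>
     (\<forall>h>0. continuous_map (S_top N B h) euclideanreal s)"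

definition S_ind_top :: "(nat \<Rightarrow> real) \<Rightarrow> (nat \<Rightarrow> real) \<Rightarrow> (real \<Rightarrow> complex) topology" where
  "S_ind_top N B = topology (\<lambda>U. U \<subseteq> S_ind N B \<and>
     (\<forall>f\<in>U. \<exists>s e. ind_seminorm N B s \<and> e > 0 \<and> {g \<in> S_ind N B. s (\<lambda>x. g x - f x) < e} \<subseteq> U))"

definition fourier :: "(real \<Rightarrow> complex) \<Rightarrow> real \<Rightarrow> complex" where
  "fourier f \<xi> = integral\<^sup>L lborel (\<lambda>x. f x * cis (x * \<xi>))"

definition inv_fourier :: "(real \<Rightarrow> complex) \<Rightarrow> real \<Rightarrow> complex" where
  "inv_fourier f \<xi> = complex_of_real (1 / (2 * pi)) * fourier f (- \<xi>)"

end

theory Submission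
  imports Defs "HOL-Probability.Characteristic_Functions" "HOL-Probability.Sinc_Integral"
begin

text \<open>Differentiation under the integral gives D^q (F f) = F((ix)^q f), and integration by parts
  turns multiplication by \<xi> into differentiation, so |\<xi>^p D^q (F f)(\<xi>)| is at most the L^1 norm of
  D^p(x^q f), i.e. at most the sum over j of (p choose j) q!/(q-j)! ||x^(q-j) f^(p-j)||_1.
  A function g with |g| <= c/R, |x g| <= c and x^2 |g| <= c S has ||g||_1 <= c (4 pi + 2 ln (S/R));
  for g = x^k f^(s) one can take R = h m_k and S = h m_(k+1), and (sm) bounds the logarithm by
  C0 H^(k+1). So the L^1 norm costs the single weight M_(k+1), which is why the target space
  carries M_+1. Log-convexity gives M_(q-j+1) <= L^j M_(q+1), and either condition on A gives
  A_(p-j) <= \<gamma> \<beta>^p A_p (in the second case because A_j >= c r^j); summing yields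
  ||F f||_(a h) <= K h ||f||_h. Continuity follows from linearity, and the inverse transform is a
  reflected multiple of F.\<close>

section \<open>Iterated derivatives\<close>

lemma vder_has_vector_derivative:
  assumes "smooth_fun f"
  shows "(vder f k has_vector_derivative vder f (Suc k) x) (at x)"
  using assms[unfolded smooth_fun_def, rule_format, of k x]
  by (simp add: vector_derivative_works)

lemma vder_Suc_eqI:
  assumes "\<And>x. (vder f k has_vector_derivative f' x) (at x)"
  shows "vder f (Suc k) = f'"
  using vector_derivative_at[OF assms] by auto

lemma continuous_on_vder:
  assumes "smooth_fun f"
  shows "continuous_on UNIV (vder f k)"
  using assms unfolding smooth_fun_def
  by (meson continuous_at_imp_continuous_on differentiable_imp_continuous_within)

lemma vder_diff:
  assumes "smooth_fun f" "smooth_fun g"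
  shows "vder (\<lambda>x. f x - g x) k = (\<lambda>x. vder f k x - vder g k x)"
proof (induction k)
  case (Suc k)
  show ?case
    by (rule vder_Suc_eqI, unfold Suc.IH)
       (intro has_vector_derivative_diff vder_has_vector_derivative assms)
qed simp

lemma smooth_fun_diff:
  assumes "smooth_fun f" "smooth_fun g"
  shows "smooth_fun (\<lambda>x. f x - g x)"
  using assms unfolding smooth_fun_def vder_diff[OF assms] by (auto intro!: differentiable_diff)

lemma vder_reflect:
  assumes "smooth_fun G"
  shows "vder (\<lambda>\<xi>. c * G (- \<xi>)) k = (\<lambda>\<xi>. c * (-1)^k * vder G k (- \<xi>))"
proof (induction k)
  case (Suc k)
  show ?case
  proof (rule vder_Suc_eqI, unfold Suc.IH)
    fix \<xi>
    have "((\<lambda>\<xi>. vder G k (- \<xi>)) has_vector_derivative - vder G (Suc k) (- \<xi>)) (at \<xi>)"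
      using vector_diff_chain_at[OF has_vector_derivative_minus[OF has_vector_derivative_id]
          vder_has_vector_derivative[OF assms, of k "- \<xi>"]]
      by (simp add: o_def)
    from has_vector_derivative_mult_right[OF this, of "c * (-1)^k"]
    show "((\<lambda>\<xi>. c * (-1)^k * vder G k (- \<xi>)) has_vector_derivative
        c * (-1)^Suc k * vder G (Suc k) (- \<xi>)) (at \<xi>)"
      by simp
  qed
qed simp

lemma smooth_fun_reflect:
  assumes "smooth_fun G"
  shows "smooth_fun (\<lambda>\<xi>. c * G (- \<xi>))"
  unfolding smooth_fun_def vder_reflect[OF assms]
proof (intro allI)
  fix k x
  have "(vder G k \<circ> uminus) differentiable at x"
    using assms unfolding smooth_fun_def by (intro differentiable_chain_at) auto
  then show "(\<lambda>\<xi>. c * (- 1) ^ k * vder G k (- \<xi>)) differentiable at x"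
    by (simp add: o_def differentiable_mult differentiable_const)
qed

section \<open>Norms on the steps\<close>

lemma S_norm_bound:
  assumes f: "f \<in> S_space N B h" and pos: "N p > 0" "B q > 0" "h > 0"
  shows "norm (complex_of_real (x^p) * vder f q x) \<le> S_norm N B h f * (h^(p+q) * N p * B q)"
proof -
  have "norm (complex_of_real (x^p) * vder f q x) / (h^(p+q) * N p * B q) \<in> S_vals N B h f"
    unfolding S_vals_def by blast
  then have "norm (complex_of_real (x^p) * vder f q x) / (h^(p+q) * N p * B q) \<le> S_norm N B h f"
    unfolding S_norm_def using f unfolding S_space_def by (auto intro: cSup_upper)
  then show ?thesis using pos by (simp add: divide_le_eq)
qed

lemma S_norm_nonneg:
  assumes "f \<in> S_space N B h" and "N 0 > 0" "B 0 > 0" "h > 0"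
  shows "S_norm N B h f \<ge> 0"
proof -
  have "norm (f 0) \<le> S_norm N B h f * (N 0 * B 0)"
    using S_norm_bound[OF assms, of 0] by simp
  then have "0 \<le> S_norm N B h f * (N 0 * B 0)" using norm_ge_zero order_trans by blast
  then show ?thesis using mult_pos_pos[OF assms(2,3)] by (metis zero_le_mult_iff not_le)
qed

lemma S_space_boundI:
  assumes sm: "smooth_fun g"
    and bd: "\<And>p q x. norm (complex_of_real (x^p) * vder g q x) \<le> K * (h^(p+q) * N p * B q)"
    and pos: "\<forall>p. N p > 0" "\<forall>q. B q > 0" "h > 0"
  shows "g \<in> S_space N B h" and "S_norm N B h g \<le> K"
proof -
  have le: "v \<le> K" if "v \<in> S_vals N B h g" for v
  proof -
    from that obtain p q x
      where v: "v = norm (complex_of_real (x^p) * vder g q x) / (h^(p+q) * N p * B q)"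
      unfolding S_vals_def by blast
    show ?thesis unfolding v using bd[of x p q] pos by (simp add: divide_le_eq)
  qed
  then have "bdd_above (S_vals N B h g)" by (meson bdd_aboveI)
  then show "g \<in> S_space N B h" unfolding S_space_def using sm by auto
  show "S_norm N B h g \<le> K"
    unfolding S_norm_def using le by (intro cSup_least) (auto simp: S_vals_def)
qed

lemma S_space_diff:
  assumes f: "f \<in> S_space N B h" and g: "g \<in> S_space N B h"
    and pos: "\<forall>p. N p > 0" "\<forall>q. B q > 0" "h > 0"
  shows "(\<lambda>x. f x - g x) \<in> S_space N B h"
proof (rule S_space_boundI(1)[OF _ _ pos])
  have sm: "smooth_fun f" "smooth_fun g" using f g unfolding S_space_def by auto
  then show "smooth_fun (\<lambda>x. f x - g x)" by (rule smooth_fun_diff)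
  fix p q x
  have "norm (complex_of_real (x^p) * vder (\<lambda>x. f x - g x) q x)
      \<le> norm (complex_of_real (x^p) * vder f q x) + norm (complex_of_real (x^p) * vder g q x)"
    unfolding vder_diff[OF sm] right_diff_distrib by (rule norm_triangle_ineq4)
  also have "\<dots> \<le> (S_norm N B h f + S_norm N B h g) * (h^(p+q) * N p * B q)"
    using S_norm_bound[OF f] S_norm_bound[OF g] pos by (simp add: distrib_right add_mono)
  finally show "norm (complex_of_real (x^p) * vder (\<lambda>x. f x - g x) q x)
      \<le> (S_norm N B h f + S_norm N B h g) * (h^(p+q) * N p * B q)" .
qed

lemma S_space_mono:
  assumes f: "f \<in> S_space N B h" and pos: "\<forall>p. N p > 0" "\<forall>q. B q > 0" "h > 0"
    and "h \<le> h'"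
  shows "f \<in> S_space N B h'" and "S_norm N B h' f \<le> S_norm N B h f"
proof -
  have "norm (complex_of_real (x^p) * vder f q x) \<le> S_norm N B h f * (h'^(p+q) * N p * B q)"
    for x p q
  proof -
    have "norm (complex_of_real (x^p) * vder f q x) \<le> S_norm N B h f * (h^(p+q) * N p * B q)"
      using S_norm_bound[OF f] pos by auto
    also have "\<dots> \<le> S_norm N B h f * (h'^(p+q) * N p * B q)"
      using pos \<open>h \<le> h'\<close> S_norm_nonneg[OF f]
      by (intro mult_left_mono mult_right_mono power_mono) (simp_all add: less_imp_le)
    finally show ?thesis .
  qed
  moreover have "smooth_fun f" using f unfolding S_space_def by auto
  moreover have "h' > 0" using pos \<open>h \<le> h'\<close> by simp
  ultimately show "f \<in> S_space N B h'" "S_norm N B h' f \<le> S_norm N B h f"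
    using S_space_boundI[of f "S_norm N B h f" h' N B] pos by auto
qed

lemma S_space_reflect:
  assumes G: "G \<in> S_space N B h" and pos: "\<forall>p. N p > 0" "\<forall>q. B q > 0" "h > 0"
  shows "(\<lambda>\<xi>. complex_of_real c * G (- \<xi>)) \<in> S_space N B h"
    and "S_norm N B h (\<lambda>\<xi>. complex_of_real c * G (- \<xi>)) \<le> \<bar>c\<bar> * S_norm N B h G"
proof -
  have sG: "smooth_fun G" using G unfolding S_space_def by auto
  have "norm (complex_of_real (\<xi>^p) * vder (\<lambda>\<xi>. complex_of_real c * G (- \<xi>)) q \<xi>)
      \<le> \<bar>c\<bar> * S_norm N B h G * (h^(p+q) * N p * B q)" for \<xi> p q
  proof -
    have "norm (complex_of_real (\<xi>^p) * vder (\<lambda>\<xi>. complex_of_real c * G (- \<xi>)) q \<xi>)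
        = \<bar>c\<bar> * norm (complex_of_real ((- \<xi>)^p) * vder G q (- \<xi>))"
      unfolding vder_reflect[OF sG] by (simp add: norm_mult norm_power)
    also have "\<dots> \<le> \<bar>c\<bar> * (S_norm N B h G * (h^(p+q) * N p * B q))"
      using S_norm_bound[OF G, of p q "- \<xi>"] pos by (intro mult_left_mono) auto
    finally show ?thesis by (simp add: ac_simps)
  qed
  note bound = this
  show "(\<lambda>\<xi>. complex_of_real c * G (- \<xi>)) \<in> S_space N B h"
    and "S_norm N B h (\<lambda>\<xi>. complex_of_real c * G (- \<xi>)) \<le> \<bar>c\<bar> * S_norm N B h G"
    by (rule S_space_boundI[OF smooth_fun_reflect[OF sG] bound pos])+
qed

section \<open>The step and inductive limit topologies\<close>

lemma istopology_local:
  assumes mono: "\<And>f U V. E f U \<Longrightarrow> U \<subseteq> V \<Longrightarrow> E f V"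
    and inter: "\<And>f U V. E f U \<Longrightarrow> E f V \<Longrightarrow> E f (U \<inter> V)"
  shows "istopology (\<lambda>U. U \<subseteq> X \<and> (\<forall>f\<in>U. E f U))"
  unfolding istopology_def
proof (intro conjI allI impI ballI)
  fix S T f assume "S \<subseteq> X \<and> (\<forall>f\<in>S. E f S)" "T \<subseteq> X \<and> (\<forall>f\<in>T. E f T)" "f \<in> S \<inter> T"
  then show "E f (S \<inter> T)" using inter by blast
next
  fix K f assume "\<forall>S\<in>K. S \<subseteq> X \<and> (\<forall>f\<in>S. E f S)" "f \<in> \<Union>K"
  then show "E f (\<Union>K)" using mono by (meson UnionE Union_upper)
qed auto

lemma topspace_topology_local:
  assumes "istopology (\<lambda>U. U \<subseteq> X \<and> (\<forall>f\<in>U. E f U))" and "\<And>f. f \<in> X \<Longrightarrow> E f X"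
  shows "topspace (topology (\<lambda>U. U \<subseteq> X \<and> (\<forall>f\<in>U. E f U))) = X"
  unfolding topspace_def topology_inverse'[OF assms(1)] using assms(2) by blast

lemma istopology_S_top:
  "istopology (\<lambda>U. U \<subseteq> S_space N B h \<and>
     (\<forall>f\<in>U. \<exists>e>0. {g \<in> S_space N B h. S_norm N B h (\<lambda>x. g x - f x) < e} \<subseteq> U))"
proof (rule istopology_local)
  fix f U V
  assume "\<exists>e>0. {g \<in> S_space N B h. S_norm N B h (\<lambda>x. g x - f x) < e} \<subseteq> U"
    and "\<exists>e>0. {g \<in> S_space N B h. S_norm N B h (\<lambda>x. g x - f x) < e} \<subseteq> V"
  then obtain e1 e2 where "e1 > 0" "e2 > 0"
    "{g \<in> S_space N B h. S_norm N B h (\<lambda>x. g x - f x) < e1} \<subseteq> U"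
    "{g \<in> S_space N B h. S_norm N B h (\<lambda>x. g x - f x) < e2} \<subseteq> V"
    by blast
  then show "\<exists>e>0. {g \<in> S_space N B h. S_norm N B h (\<lambda>x. g x - f x) < e} \<subseteq> U \<inter> V"
    by (intro exI[of _ "min e1 e2"]) auto
qed (meson order_trans)

lemma openin_S_top:
  "openin (S_top N B h) U \<longleftrightarrow> U \<subseteq> S_space N B h \<and>
     (\<forall>f\<in>U. \<exists>e>0. {g \<in> S_space N B h. S_norm N B h (\<lambda>x. g x - f x) < e} \<subseteq> U)"
  unfolding S_top_def topology_inverse'[OF istopology_S_top] ..

lemma topspace_S_top: "topspace (S_top N B h) = S_space N B h"
  unfolding S_top_def by (rule topspace_topology_local[OF istopology_S_top]) (auto intro: exI[of _ 1])

lemma ind_seminorm_max: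
  assumes s1: "ind_seminorm N B s1" and s2: "ind_seminorm N B s2"
  shows "ind_seminorm N B (\<lambda>f. max (s1 f) (s2 f))"
  unfolding ind_seminorm_def
proof (intro conjI ballI allI impI)
  fix f assume f: "f \<in> S_ind N B"
  show "0 \<le> max (s1 f) (s2 f)" using s1 f unfolding ind_seminorm_def by (auto simp: le_max_iff_disj)
  fix c :: complex
  show "max (s1 (\<lambda>x. c * f x)) (s2 (\<lambda>x. c * f x)) = cmod c * max (s1 f) (s2 f)"
    using s1 s2 f unfolding ind_seminorm_def by (simp add: max_mult_distrib_left)
next
  fix f g assume "f \<in> S_ind N B" "g \<in> S_ind N B"
  then have "s1 (\<lambda>x. f x + g x) \<le> s1 f + s1 g" "s2 (\<lambda>x. f x + g x) \<le> s2 f + s2 g"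
    using s1 s2 unfolding ind_seminorm_def by auto
  then show "max (s1 (\<lambda>x. f x + g x)) (s2 (\<lambda>x. f x + g x)) \<le> max (s1 f) (s2 f) + max (s1 g) (s2 g)"
    by linarith
next
  fix h :: real assume "h > 0"
  then show "continuous_map (S_top N B h) euclideanreal (\<lambda>f. max (s1 f) (s2 f))"
    using s1 s2 unfolding ind_seminorm_def by (intro continuous_map_real_max) auto
qed

lemma istopology_S_ind_top:
  "istopology (\<lambda>U. U \<subseteq> S_ind N B \<and>
     (\<forall>f\<in>U. \<exists>s e. ind_seminorm N B s \<and> e > 0 \<and> {g \<in> S_ind N B. s (\<lambda>x. g x - f x) < e} \<subseteq> U))"
proof (rule istopology_local)
  fix f U V
  assume "\<exists>s e. ind_seminorm N B s \<and> e > 0 \<and> {g \<in> S_ind N B. s (\<lambda>x. g x - f x) < e} \<subseteq> U"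
    and "\<exists>s e. ind_seminorm N B s \<and> e > 0 \<and> {g \<in> S_ind N B. s (\<lambda>x. g x - f x) < e} \<subseteq> V"
  then obtain s1 e1 s2 e2 where "ind_seminorm N B s1" "e1 > 0" "ind_seminorm N B s2" "e2 > 0"
    "{g \<in> S_ind N B. s1 (\<lambda>x. g x - f x) < e1} \<subseteq> U"
    "{g \<in> S_ind N B. s2 (\<lambda>x. g x - f x) < e2} \<subseteq> V"
    by blast
  then show "\<exists>s e. ind_seminorm N B s \<and> e > 0 \<and> {g \<in> S_ind N B. s (\<lambda>x. g x - f x) < e} \<subseteq> U \<inter> V"
    using ind_seminorm_max[of N B s1 s2]
    by (intro exI[of _ "\<lambda>u. max (s1 u) (s2 u)"] exI[of _ "min e1 e2"] conjI) auto
next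
  fix f U V
  assume "\<exists>s e. ind_seminorm N B s \<and> e > 0 \<and> {g \<in> S_ind N B. s (\<lambda>x. g x - f x) < e} \<subseteq> U"
    and "U \<subseteq> V"
  then show "\<exists>s e. ind_seminorm N B s \<and> e > 0 \<and> {g \<in> S_ind N B. s (\<lambda>x. g x - f x) < e} \<subseteq> V"
    by (meson order_trans)
qed

lemma openin_S_ind_top:
  "openin (S_ind_top N B) U \<longleftrightarrow> U \<subseteq> S_ind N B \<and>
     (\<forall>f\<in>U. \<exists>s e. ind_seminorm N B s \<and> e > 0 \<and> {g \<in> S_ind N B. s (\<lambda>x. g x - f x) < e} \<subseteq> U)"
  unfolding S_ind_top_def topology_inverse'[OF istopology_S_ind_top] ..

lemma topspace_S_ind_top: "topspace (S_ind_top N B) = S_ind N B"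
proof -
  have "ind_seminorm N B (\<lambda>_. 0)" unfolding ind_seminorm_def by auto
  then show ?thesis
    unfolding S_ind_top_def
    by (intro topspace_topology_local[OF istopology_S_ind_top]) (auto intro!: exI[of _ 1])
qed

lemma continuous_map_S_top_of_norm_bound:
  assumes posX: "\<forall>p. NX p > 0" "\<forall>q. BX q > 0" "hX > 0"
    and maps: "\<And>u. u \<in> S_space NX BX hX \<Longrightarrow> T u \<in> S_space NY BY hY"
    and diff: "\<And>u v. u \<in> S_space NX BX hX \<Longrightarrow> v \<in> S_space NX BX hX \<Longrightarrow>
               T (\<lambda>x. v x - u x) = (\<lambda>x. T v x - T u x)"
    and bound: "\<And>u. u \<in> S_space NX BX hX \<Longrightarrow> S_norm NY BY hY (T u) \<le> K * S_norm NX BX hX u"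
    and K: "K > 0"
  shows "continuous_map (S_top NX BX hX) (S_top NY BY hY) T"
  unfolding continuous_map_def topspace_S_top
proof (intro conjI allI impI)
  show "T \<in> S_space NX BX hX \<rightarrow> S_space NY BY hY" using maps by auto
  fix U assume U: "openin (S_top NY BY hY) U"
  show "openin (S_top NX BX hX) {u \<in> S_space NX BX hX. T u \<in> U}"
    unfolding openin_S_top
  proof (intro conjI ballI)
    fix f assume f: "f \<in> {u \<in> S_space NX BX hX. T u \<in> U}"
    then obtain e where e: "e > 0" "{g \<in> S_space NY BY hY. S_norm NY BY hY (\<lambda>x. g x - T f x) < e} \<subseteq> U"
      using U unfolding openin_S_top by blast
    have "T g \<in> U" if g: "g \<in> S_space NX BX hX" "S_norm NX BX hX (\<lambda>x. g x - f x) < e / K" for g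
    proof -
      have fX: "f \<in> S_space NX BX hX" using f by blast
      have "S_norm NY BY hY (\<lambda>x. T g x - T f x) = S_norm NY BY hY (T (\<lambda>x. g x - f x))"
        using diff[OF fX g(1)] by simp
      also have "\<dots> \<le> K * S_norm NX BX hX (\<lambda>x. g x - f x)"
        by (rule bound[OF S_space_diff[OF g(1) fX posX]])
      also have "\<dots> < e" using g K by (simp add: field_simps)
      finally show ?thesis using e maps[OF g(1)] by blast
    qed
    then show "\<exists>e>0. {g \<in> S_space NX BX hX. S_norm NX BX hX (\<lambda>x. g x - f x) < e}
        \<subseteq> {u \<in> S_space NX BX hX. T u \<in> U}"
      using e K by (intro exI[of _ "e / K"]) auto
  qed auto
qed

text \<open>Composition with \<open>T\<close> pulls every defining seminorm of the target back to one of the source.\<close>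
lemma continuous_map_S_ind_top_of_steps:
  assumes maps: "\<And>u. u \<in> S_ind NX BX \<Longrightarrow> T u \<in> S_ind NY BY"
    and lin: "\<And>u v c d. u \<in> S_ind NX BX \<Longrightarrow> v \<in> S_ind NX BX \<Longrightarrow>
               T (\<lambda>x. c * u x + d * v x) = (\<lambda>x. c * T u x + d * T v x)"
    and step: "\<And>h. h > 0 \<Longrightarrow> \<exists>h'>0. continuous_map (S_top NX BX h) (S_top NY BY h') T"
  shows "continuous_map (S_ind_top NX BX) (S_ind_top NY BY) T"
  unfolding continuous_map_def topspace_S_ind_top
proof (intro conjI allI impI)
  show "T \<in> S_ind NX BX \<rightarrow> S_ind NY BY" using maps by auto
  fix U assume U: "openin (S_ind_top NY BY) U"
  show "openin (S_ind_top NX BX) {u \<in> S_ind NX BX. T u \<in> U}"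
    unfolding openin_S_ind_top
  proof (intro conjI ballI)
    fix f assume f: "f \<in> {u \<in> S_ind NX BX. T u \<in> U}"
    then obtain t e where t: "ind_seminorm NY BY t" and e: "e > 0"
      and ball: "{g \<in> S_ind NY BY. t (\<lambda>x. g x - T f x) < e} \<subseteq> U"
      using U unfolding openin_S_ind_top by blast
    have "ind_seminorm NX BX (\<lambda>u. t (T u))"
      unfolding ind_seminorm_def
    proof (intro conjI ballI allI impI)
      fix h :: real assume "h > 0"
      then obtain h' where "h' > 0" "continuous_map (S_top NX BX h) (S_top NY BY h') T"
        using step by blast
      then show "continuous_map (S_top NX BX h) euclideanreal (\<lambda>u. t (T u))"
        using t continuous_map_compose[of _ _ T euclideanreal t]
        unfolding ind_seminorm_def by (auto simp: o_def)
    qed (use t maps lin[of _ _ 1 1] lin[of _ _ _ 0] in \<open>auto simp: ind_seminorm_def\<close>)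
    moreover have "T g \<in> U" if "g \<in> S_ind NX BX" "t (T (\<lambda>x. g x - f x)) < e" for g
      using that f ball maps lin[of g f 1 "-1"] by auto
    ultimately show "\<exists>s e. ind_seminorm NX BX s \<and> e > 0 \<and>
        {g \<in> S_ind NX BX. s (\<lambda>x. g x - f x) < e} \<subseteq> {u \<in> S_ind NX BX. T u \<in> U}"
      using e by (intro exI[of _ "\<lambda>u. t (T u)"] exI[of _ e]) auto
  qed auto
qed

lemma continuity_of_S_space_estimate:
  fixes T :: "(real \<Rightarrow> complex) \<Rightarrow> real \<Rightarrow> complex"
  assumes posX: "\<forall>p. NX p > 0" "\<forall>q. BX q > 0" and a: "a > 0" and K: "K > 0"
    and est: "\<forall>h\<ge>1. \<forall>u\<in>S_space NX BX h. T u \<in> S_space NY BY (a * h) \<and>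
               S_norm NY BY (a * h) (T u) \<le> K * h * S_norm NX BX h u"
    and lin: "\<And>u v c d. u \<in> S_ind NX BX \<Longrightarrow> v \<in> S_ind NX BX \<Longrightarrow>
               T (\<lambda>x. c * u x + d * v x) = (\<lambda>x. c * T u x + d * T v x)"
  shows "(\<exists>a>0. \<forall>h\<ge>1. T ` S_space NX BX h \<subseteq> S_space NY BY (a * h) \<and>
            continuous_map (S_top NX BX h) (S_top NY BY (a * h)) T)
       \<and> (T ` S_ind NX BX \<subseteq> S_ind NY BY \<and>
            continuous_map (S_ind_top NX BX) (S_ind_top NY BY) T)"
proof -
  have maps: "T u \<in> S_space NY BY (a * max h 1)"
    and bound: "S_norm NY BY (a * max h 1) (T u) \<le> K * max h 1 * S_norm NX BX h u"
    if h: "h > 0" and u: "u \<in> S_space NX BX h" for h u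
  proof -
    note mono = S_space_mono[OF u posX h, of "max h 1"]
    show "T u \<in> S_space NY BY (a * max h 1)" using est mono by auto
    have "S_norm NY BY (a * max h 1) (T u) \<le> K * max h 1 * S_norm NX BX (max h 1) u"
      using est mono by auto
    also have "\<dots> \<le> K * max h 1 * S_norm NX BX h u" using mono K by (intro mult_left_mono) auto
    finally show "S_norm NY BY (a * max h 1) (T u) \<le> K * max h 1 * S_norm NX BX h u" .
  qed
  have S_ind_S_space: "u \<in> S_ind NX BX" if "u \<in> S_space NX BX h" "h > 0" for u h
    using that unfolding S_ind_def by auto
  have step: "continuous_map (S_top NX BX h) (S_top NY BY (a * max h 1)) T" if h: "h > 0" for h
    using maps[OF h] bound[OF h] K S_ind_S_space[OF _ h] lin[of _ _ 1 "-1"]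
    by (intro continuous_map_S_top_of_norm_bound[OF posX h, where K = "K * max h 1"]) auto
  have "T ` S_ind NX BX \<subseteq> S_ind NY BY"
    using maps a unfolding S_ind_def by (fastforce intro: mult_pos_pos)
  moreover have "continuous_map (S_ind_top NX BX) (S_ind_top NY BY) T"
    using calculation step a lin by (intro continuous_map_S_ind_top_of_steps) (auto intro!: exI[of _ "a * max _ 1"])
  moreover have "T ` S_space NX BX h \<subseteq> S_space NY BY (a * h)"
    and "continuous_map (S_top NX BX h) (S_top NY BY (a * h)) T" if "h \<ge> 1" for h
    using maps[of h] step[of h] that by (auto simp: max_def)
  ultimately show ?thesis using a by blast
qed

section \<open>Integrals on the real line\<close>

lemma inverse_1_plus_scaled_square_integral:
  assumes T: "T > 0"
  shows "integrable lborel (\<lambda>x::real. inverse (1 + (x/T)^2))"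
    and "integral\<^sup>L lborel (\<lambda>x::real. inverse (1 + (x/T)^2)) = T * pi"
proof -
  have i0: "integrable lborel (\<lambda>x::real. inverse (1 + x^2))"
    using integrable_inverse_1_plus_square by (simp add: set_integrable_def einterval_eq_UNIV)
  have v0: "integral\<^sup>L lborel (\<lambda>x::real. inverse (1 + x^2)) = pi"
    using LBINT_inverse_1_plus_square
    by (simp add: interval_lebesgue_integral_def set_lebesgue_integral_def einterval_eq_UNIV)
  show "integrable lborel (\<lambda>x::real. inverse (1 + (x/T)^2))"
    using lborel_integrable_real_affine[OF i0, of "1/T" 0] T by simp
  have "integral\<^sup>L lborel (\<lambda>x::real. inverse (1 + x^2))
      = \<bar>1/T\<bar> *\<^sub>R integral\<^sup>L lborel (\<lambda>x::real. inverse (1 + (0 + (1/T) * x)^2))"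
    using T by (intro lborel_integral_real_affine) simp
  then show "integral\<^sup>L lborel (\<lambda>x::real. inverse (1 + (x/T)^2)) = T * pi"
    using T v0 by (simp add: field_simps)
qed

lemma inverse_on_interval_integral:
  fixes R S :: real
  assumes R: "0 < R" "R \<le> S"
  shows "integrable lborel (\<lambda>x. indicator {R..S} x *\<^sub>R (1/x))"
    and "integral\<^sup>L lborel (\<lambda>x. indicator {R..S} x *\<^sub>R (1/x)) = ln S - ln R"
proof -
  have c: "continuous_on {R..S} (\<lambda>x::real. 1/x)" using R by (intro continuous_intros) auto
  show "integrable lborel (\<lambda>x. indicator {R..S} x *\<^sub>R (1/x))"
    using borel_integrable_atLeastAtMost'[OF c] by (simp add: set_integrable_def)
  show "integral\<^sup>L lborel (\<lambda>x. indicator {R..S} x *\<^sub>R (1/x)) = ln S - ln R"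
  proof (rule integral_FTC_atLeastAtMost[OF R(2) _ c])
    fix x assume "R \<le> x" "x \<le> S"
    then have "x > 0" using R by simp
    then have "(ln has_real_derivative 1/x) (at x within {R..S})"
      by (rule has_field_derivative_at_within[OF DERIV_ln_divide])
    then show "(ln has_vector_derivative 1/x) (at x within {R..S})"
      by (simp add: has_real_derivative_iff_has_vector_derivative)
  qed
qed

lemma inverse_on_reflected_interval_integral:
  fixes R S :: real
  assumes R: "0 < R" "R \<le> S"
  shows "integrable lborel (\<lambda>x. indicator {R..S} (-x) *\<^sub>R (1/(-x)))"
    and "integral\<^sup>L lborel (\<lambda>x. indicator {R..S} (-x) *\<^sub>R (1/(-x))) = ln S - ln R"
proof -
  show "integrable lborel (\<lambda>x. indicator {R..S} (-x) *\<^sub>R (1/(-x)))"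
    using lborel_integrable_real_affine[OF inverse_on_interval_integral(1)[OF R], of "-1" 0] by simp
  have "integral\<^sup>L lborel (\<lambda>x. indicator {R..S} x *\<^sub>R (1/x)) =
     \<bar>-1\<bar> *\<^sub>R integral\<^sup>L lborel (\<lambda>x. indicator {R..S} (0 + (-1) * x) *\<^sub>R (1/(0 + (-1) * x)))"
    by (intro lborel_integral_real_affine) simp
  then show "integral\<^sup>L lborel (\<lambda>x. indicator {R..S} (-x) *\<^sub>R (1/(-x))) = ln S - ln R"
    using inverse_on_interval_integral(2)[OF R] by simp
qed

lemma integrable_of_square_decay:
  fixes g :: "real \<Rightarrow> complex"
  assumes g: "g \<in> borel_measurable lborel"
    and "\<And>x. norm (g x) \<le> c0" and "\<And>x. x^2 * norm (g x) \<le> c2"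
  shows "integrable lborel g"
proof (rule Bochner_Integration.integrable_bound[OF _ g])
  show "integrable lborel (\<lambda>x. (c0 + c2) * inverse (1 + x^2))"
    using inverse_1_plus_scaled_square_integral(1)[of 1] by simp
  have "norm (g x) \<le> (c0 + c2) * inverse (1 + x^2)" for x
  proof -
    have "(1 + x^2) * norm (g x) \<le> c0 + c2" using assms(2,3)[of x] by (simp add: distrib_right)
    then show ?thesis by (simp add: field_simps add_pos_nonneg)
  qed
  then show "AE x in lborel. norm (g x) \<le> norm ((c0 + c2) * inverse (1 + x^2))"
    by (auto intro: order_trans[OF _ abs_ge_self])
qed

definition moment_majorant :: "real \<Rightarrow> real \<Rightarrow> real \<Rightarrow> real" where
  "moment_majorant R S x = 2/R * inverse (1 + (x/R)^2) + 2/S * inverse (1 + (x/S)^2)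
     + (indicator {R..S} x *\<^sub>R (1/x) + indicator {R..S} (-x) *\<^sub>R (1/(-x)))"

lemma moment_majorant_integral:
  assumes "0 < R" "R \<le> S"
  shows "integrable lborel (moment_majorant R S)"
    and "integral\<^sup>L lborel (moment_majorant R S) = 4*pi + 2 * ln (S/R)"
proof -
  have pos: "R > 0" "S > 0" using assms by auto
  note I = inverse_1_plus_scaled_square_integral[OF pos(1)]
    inverse_1_plus_scaled_square_integral[OF pos(2)]
    inverse_on_interval_integral[OF assms] inverse_on_reflected_interval_integral[OF assms]
  show "integrable lborel (moment_majorant R S)"
    unfolding moment_majorant_def[abs_def] using I
    by (intro Bochner_Integration.integrable_add integrable_mult_right)
  have "integral\<^sup>L lborel (moment_majorant R S) = 2/R * (R*pi) + 2/S * (S*pi) + 2 * (ln S - ln R)"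
    unfolding moment_majorant_def[abs_def] using I by (simp add: integrable_add integrable_mult_right)
  then show "integral\<^sup>L lborel (moment_majorant R S) = 4*pi + 2 * ln (S/R)"
    using pos by (simp add: ln_div)
qed

lemma moment_majorant_ge:
  fixes y :: real
  assumes R: "0 < R" "R \<le> S" and c: "c \<ge> 0"
    and y0: "R * y \<le> c" and y1: "\<bar>x\<bar> * y \<le> c" and y2: "x^2 * y \<le> c * S"
  shows "y \<le> c * moment_majorant R S x"
proof -
  have P1: "0 \<le> 2/R * inverse (1 + (x/R)^2)" and P2: "0 \<le> 2/S * inverse (1 + (x/S)^2)"
    and P3: "0 \<le> indicator {R..S} x *\<^sub>R (1/x) + indicator {R..S} (-x) *\<^sub>R (1/(-x))"
    using R by (auto simp: indicator_def)
  consider "\<bar>x\<bar> \<le> R" | "\<bar>x\<bar> \<ge> S" | "R < \<bar>x\<bar>" "\<bar>x\<bar> < S" by linarith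
  then show ?thesis
  proof cases
    case 1
    then have "\<bar>x/R\<bar> \<le> 1" using R by (simp add: abs_divide)
    then have "(x/R)^2 \<le> 1" using abs_le_square_iff[of "x/R" 1] by simp
    moreover have "1 \<le> 2 * inverse (1 + t)" if "0 \<le> t" "t \<le> 1" for t :: real
      using that by (simp add: field_simps)
    ultimately have "1/R * 1 \<le> 1/R * (2 * inverse (1 + (x/R)^2))"
      using R by (intro mult_left_mono) auto
    then have "1/R \<le> 2/R * inverse (1 + (x/R)^2)" by simp
    then have "1/R \<le> moment_majorant R S x" unfolding moment_majorant_def using P2 P3 by linarith
    moreover have "y \<le> c * (1/R)" using y0 R by (simp add: field_simps)
    ultimately show ?thesis using c by (meson mult_left_mono order_trans)
  next
    case 2
    then have "\<bar>S\<bar> \<le> \<bar>x\<bar>" using R by simp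
    then have "S^2 \<le> x^2" by (simp only: abs_le_square_iff)
    moreover have "x^2 > 0" using 2 R by auto
    ultimately have x2: "S^2 \<le> x^2" "x^2 > 0" .
    have "S/x^2 = (2*S) / (2*x^2)" by simp
    also have "\<dots> \<le> 2*S / (S^2 + x^2)" using x2 R by (intro divide_left_mono) (auto intro!: mult_pos_pos add_pos_pos)
    also have "\<dots> = 2/S * inverse (1 + (x/S)^2)" using R by (simp add: field_simps power2_eq_square)
    finally have "S/x^2 \<le> 2/S * inverse (1 + (x/S)^2)" .
    then have "S/x^2 \<le> moment_majorant R S x" unfolding moment_majorant_def using P1 P3 by linarith
    moreover have "y \<le> c * (S/x^2)" using y2 x2 by (simp add: field_simps)
    ultimately show ?thesis using c by (meson mult_left_mono order_trans)
  next
    case 3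
    then have "indicator {R..S} x *\<^sub>R (1/x) + indicator {R..S} (-x) *\<^sub>R (1/(-x)) = 1/\<bar>x\<bar>"
      using R by (cases "x \<ge> 0") (auto simp: indicator_def)
    then have "1/\<bar>x\<bar> \<le> moment_majorant R S x" unfolding moment_majorant_def using P1 P2 by linarith
    moreover have "y \<le> c * (1/\<bar>x\<bar>)" using y1 3 R by (simp add: field_simps)
    ultimately show ?thesis using c by (meson mult_left_mono order_trans)
  qed
qed

text \<open>Using each bound where it is best (on |x| <= R, R <= |x| <= S and |x| >= S) loses only the
  factor ln (S/R); the single majorant c (1 + x^2)\<inverse> would lose S/R.\<close>
lemma integral_norm_le_moment_bound:
  fixes g :: "real \<Rightarrow> complex"
  assumes g: "integrable lborel g" and R: "0 < R" "R \<le> S" and c: "c \<ge> 0"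
    and "\<And>x. R * norm (g x) \<le> c" and "\<And>x. \<bar>x\<bar> * norm (g x) \<le> c"
    and "\<And>x. x^2 * norm (g x) \<le> c * S"
  shows "integral\<^sup>L lborel (\<lambda>x. norm (g x)) \<le> c * (4*pi + 2 * ln (S/R))"
proof -
  have "integral\<^sup>L lborel (\<lambda>x. norm (g x)) \<le> integral\<^sup>L lborel (\<lambda>x. c * moment_majorant R S x)"
    using assms moment_majorant_integral(1)[OF R]
    by (intro integral_mono moment_majorant_ge integrable_norm integrable_mult_right) auto
  then show ?thesis using moment_majorant_integral(2)[OF R] by simp
qed

section \<open>The Fourier transform\<close>

lemma integrable_mult_cis:
  assumes "integrable lborel g"
  shows "integrable lborel (\<lambda>x. g x * cis (x * \<xi>))"
proof (rule Bochner_Integration.integrable_bound[OF assms])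
  have "(\<lambda>x. cis (x * \<xi>)) \<in> borel_measurable borel"
    by (intro borel_measurable_continuous_onI continuous_intros)
  then show "(\<lambda>x. g x * cis (x * \<xi>)) \<in> borel_measurable lborel"
    using borel_measurable_integrable[OF assms] by (auto intro: borel_measurable_times)
qed (simp add: norm_mult)

lemma fourier_norm_le: "norm (fourier g \<xi>) \<le> integral\<^sup>L lborel (\<lambda>x. norm (g x))"
  unfolding fourier_def using integral_norm_bound[of lborel "\<lambda>x. g x * cis (x * \<xi>)"]
  by (simp add: norm_mult)

lemma fourier_cmult: "fourier (\<lambda>x. c * f x) \<xi> = c * fourier f \<xi>"
  unfolding fourier_def by (simp add: mult.assoc)

lemma fourier_lincomb:
  assumes "integrable lborel u" "integrable lborel v"
  shows "fourier (\<lambda>x. c * u x + d * v x) \<xi> = c * fourier u \<xi> + d * fourier v \<xi>"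
  unfolding fourier_def using integrable_mult_cis[OF assms(1)] integrable_mult_cis[OF assms(2)]
  by (simp add: distrib_right mult.assoc)

lemma cis_taylor1_bound:
  "norm (cis (x * \<eta>) - cis (x * \<xi>) - complex_of_real (\<eta> - \<xi>) * (\<i> * complex_of_real x * cis (x * \<xi>)))
     \<le> (x * (\<eta> - \<xi>))^2 / 2"
proof -
  let ?t = "x * (\<eta> - \<xi>)"
  have "cis (x * \<eta>) = cis (x * \<xi>) * cis ?t" by (simp add: cis_mult algebra_simps)
  then have "cis (x * \<eta>) - cis (x * \<xi>) - complex_of_real (\<eta> - \<xi>) * (\<i> * complex_of_real x * cis (x * \<xi>))
      = cis (x * \<xi>) * (cis ?t - (1 + \<i> * complex_of_real ?t))"
    by (simp add: algebra_simps)
  then have "norm (cis (x * \<eta>) - cis (x * \<xi>) - complex_of_real (\<eta> - \<xi>) * (\<i> * complex_of_real x * cis (x * \<xi>)))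
      = cmod (iexp ?t - (\<Sum>k \<le> 1. (\<i> * complex_of_real ?t)^k / fact k))"
    by (simp add: norm_mult cis_conv_exp)
  also have "\<dots> \<le> \<bar>?t\<bar>^(Suc 1) / fact (Suc 1)" by (rule iexp_approx1)
  finally show ?thesis by (simp add: power2_eq_square)
qed

lemma fourier_taylor1_bound:
  assumes i0: "integrable lborel g" and i1: "integrable lborel (\<lambda>x. complex_of_real x * g x)"
    and i2: "integrable lborel (\<lambda>x. complex_of_real x ^ 2 * g x)"
  shows "norm (fourier g \<eta> - fourier g \<xi> - (\<eta> - \<xi>) *\<^sub>R fourier (\<lambda>x. \<i> * complex_of_real x * g x) \<xi>)
    \<le> (\<eta> - \<xi>)^2 / 2 * integral\<^sup>L lborel (\<lambda>x. norm (complex_of_real x ^ 2 * g x))"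
proof -
  define r where "r x = cis (x * \<eta>) - cis (x * \<xi>) - complex_of_real (\<eta> - \<xi>) * (\<i> * complex_of_real x * cis (x * \<xi>))"
    for x
  define b where "b x = (\<eta> - \<xi>)^2 / 2 * norm (complex_of_real x ^ 2 * g x)" for x
  have i1': "integrable lborel (\<lambda>x. \<i> * complex_of_real x * g x)"
    using integrable_mult_right[OF i1, of \<i>] by (simp add: mult.assoc)
  have ib: "integrable lborel b" unfolding b_def[abs_def] using i2 by (intro integrable_mult_right integrable_norm)
  have rb: "norm (g x * r x) \<le> b x" for x
  proof -
    have "norm (g x * r x) \<le> norm (g x) * ((x * (\<eta> - \<xi>))^2 / 2)"
      unfolding r_def norm_mult by (intro mult_left_mono cis_taylor1_bound) simp
    also have "\<dots> = b x" by (simp add: b_def norm_mult norm_power power_mult_distrib)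
    finally show ?thesis .
  qed
  have "r \<in> borel_measurable borel"
    unfolding r_def[abs_def] by (intro borel_measurable_continuous_onI continuous_intros)
  then have ir: "integrable lborel (\<lambda>x. g x * r x)"
    using borel_measurable_integrable[OF i0] rb
    by (intro Bochner_Integration.integrable_bound[OF ib])
       (auto intro: borel_measurable_times order_trans[OF rb abs_ge_self])
  have "integral\<^sup>L lborel (\<lambda>x. g x * r x) = integral\<^sup>L lborel (\<lambda>x. (g x * cis (x * \<eta>) - g x * cis (x * \<xi>))
          - complex_of_real (\<eta> - \<xi>) * (\<i> * complex_of_real x * g x * cis (x * \<xi>)))"
    unfolding r_def by (rule Bochner_Integration.integral_cong) (simp_all add: algebra_simps)
  also have "\<dots> = fourier g \<eta> - fourier g \<xi> - (\<eta> - \<xi>) *\<^sub>R fourier (\<lambda>x. \<i> * complex_of_real x * g x) \<xi>"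
    unfolding fourier_def scaleR_conv_of_real
    using integrable_mult_cis[OF i0, of \<eta>] integrable_mult_cis[OF i0, of \<xi>] integrable_mult_cis[OF i1', of \<xi>]
    by (simp add: Bochner_Integration.integral_diff integrable_mult_right)
  finally have "norm (fourier g \<eta> - fourier g \<xi> - (\<eta> - \<xi>) *\<^sub>R fourier (\<lambda>x. \<i> * complex_of_real x * g x) \<xi>)
      \<le> integral\<^sup>L lborel (\<lambda>x. norm (g x * r x))"
    using integral_norm_bound by metis
  also have "\<dots> \<le> integral\<^sup>L lborel b" using ir ib rb by (intro integral_mono) auto
  finally show ?thesis unfolding b_def by simp
qed

lemma has_vector_derivative_fourier:
  assumes i0: "integrable lborel g" and i1: "integrable lborel (\<lambda>x. complex_of_real x * g x)"
    and i2: "integrable lborel (\<lambda>x. complex_of_real x ^ 2 * g x)"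
  shows "(fourier g has_vector_derivative fourier (\<lambda>x. \<i> * complex_of_real x * g x) \<xi>) (at \<xi>)"
proof -
  define D where "D = fourier (\<lambda>x. \<i> * complex_of_real x * g x) \<xi>"
  define K where "K = integral\<^sup>L lborel (\<lambda>x. norm (complex_of_real x ^ 2 * g x))"
  have bound: "norm (norm (fourier g y - fourier g \<xi> - (y - \<xi>) *\<^sub>R D) / norm (y - \<xi>))
      \<le> \<bar>y - \<xi>\<bar> / 2 * K" for y
  proof (cases "y = \<xi>")
    case False
    have "norm (fourier g y - fourier g \<xi> - (y - \<xi>) *\<^sub>R D) \<le> \<bar>y - \<xi>\<bar> * (\<bar>y - \<xi>\<bar> / 2 * K)"
      using fourier_taylor1_bound[OF assms, of y \<xi>] unfolding D_def K_def
      by (simp add: power2_eq_square abs_mult_self_eq)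
    then show ?thesis using False by (simp add: divide_le_eq mult.commute)
  qed simp
  have "((\<lambda>y. \<bar>y - \<xi>\<bar> / 2 * K) \<longlongrightarrow> \<bar>\<xi> - \<xi>\<bar> / 2 * K) (at \<xi>)"
    by (intro tendsto_intros) simp
  then have "((\<lambda>y. \<bar>y - \<xi>\<bar> / 2 * K) \<longlongrightarrow> 0) (at \<xi>)" by simp
  then have "((\<lambda>y. norm (fourier g y - fourier g \<xi> - (y - \<xi>) *\<^sub>R D) / norm (y - \<xi>)) \<longlongrightarrow> 0) (at \<xi>)"
    by (rule Lim_null_comparison[OF always_eventually[OF allI[OF bound]]])
  note lim = this
  show ?thesis
    unfolding has_vector_derivative_def has_derivative_iff_norm D_def[symmetric]
    using lim by (simp add: bounded_linear_scaleR_left)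
qed

lemma vder_fourier:
  assumes mom: "\<And>k. integrable lborel (\<lambda>x. complex_of_real x ^ k * f x)"
  shows "vder (fourier f) q = fourier (\<lambda>x. (\<i> * complex_of_real x)^q * f x)"
    and "smooth_fun (fourier f)"
proof -
  have d: "(fourier (\<lambda>x. (\<i> * complex_of_real x)^k * f x) has_vector_derivative
            fourier (\<lambda>x. (\<i> * complex_of_real x)^(Suc k) * f x) \<xi>) (at \<xi>)" for k \<xi>
  proof -
    have "(\<lambda>x. complex_of_real x ^ j * ((\<i> * complex_of_real x)^k * f x))
        = (\<lambda>x. \<i>^k * (complex_of_real x ^ (j + k) * f x))" for j
      by (simp add: fun_eq_iff power_mult_distrib power_add ac_simps)
    then have m: "integrable lborel (\<lambda>x. complex_of_real x ^ j * ((\<i> * complex_of_real x)^k * f x))" for j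
      using mom by simp
    show ?thesis
      using has_vector_derivative_fourier[OF m[of 0, simplified] m[of 1, simplified] m[of 2]]
      by (simp add: ac_simps)
  qed
  show vf: "vder (fourier f) q = fourier (\<lambda>x. (\<i> * complex_of_real x)^q * f x)" for q
  proof (induction q)
    case (Suc q)
    show ?case by (rule vder_Suc_eqI, unfold Suc.IH) (rule d)
  qed simp
  show "smooth_fun (fourier f)"
    unfolding smooth_fun_def vf using d by (auto intro: differentiableI_vector)
qed

lemma has_vector_derivative_cis:
  "((\<lambda>x. cis (x * \<xi>)) has_vector_derivative (\<i> * complex_of_real \<xi> * cis (x * \<xi>))) (at x)"
proof -
  have "((\<lambda>z. exp (\<i> * complex_of_real \<xi> * z)) has_field_derivative
          (\<i> * complex_of_real \<xi> * exp (\<i> * complex_of_real \<xi> * complex_of_real x))) (at (complex_of_real x))"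
    by (auto intro!: derivative_eq_intros)
  from has_vector_derivative_real_field[OF this] show ?thesis
    by (simp add: cis_conv_exp mult.commute mult.left_commute)
qed

lemma integral_derivative_vanishing_at_infinity:
  fixes \<phi> :: "real \<Rightarrow> complex"
  assumes "\<And>x. (\<phi> has_vector_derivative \<phi>' x) (at x)" and "\<And>x. isCont \<phi>' x"
    and "integrable lborel \<phi>'" and "(\<phi> \<longlongrightarrow> 0) at_top" and "(\<phi> \<longlongrightarrow> 0) at_bot"
  shows "integral\<^sup>L lborel \<phi>' = 0"
proof -
  have "(LBINT x=-\<infinity>..\<infinity>. \<phi>' x) = 0 - 0"
    using assms
    by (intro interval_integral_FTC_integrable[where F = \<phi>])
       (auto simp: set_integrable_def einterval_eq_UNIV ereal_tendsto_simps1)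
  then show ?thesis
    by (simp add: interval_lebesgue_integral_def set_lebesgue_integral_def einterval_eq_UNIV)
qed

lemma fourier_of_derivative:
  assumes d: "\<And>x. (g has_vector_derivative g' x) (at x)" and gc': "continuous_on UNIV g'"
    and ig: "integrable lborel g" and ig': "integrable lborel g'"
    and lt: "(g \<longlongrightarrow> 0) at_top" and lb: "(g \<longlongrightarrow> 0) at_bot"
  shows "fourier g' \<xi> = - (\<i> * complex_of_real \<xi>) * fourier g \<xi>"
proof -
  define \<phi>' where "\<phi>' x = \<i> * complex_of_real \<xi> * (g x * cis (x * \<xi>)) + g' x * cis (x * \<xi>)" for x
  have i: "integrable lborel (\<lambda>x. \<i> * complex_of_real \<xi> * (g x * cis (x * \<xi>)))"
    "integrable lborel (\<lambda>x. g' x * cis (x * \<xi>))"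
    using integrable_mult_cis[OF ig] integrable_mult_cis[OF ig'] by (auto intro: integrable_mult_right)
  have "((\<lambda>x. g x * cis (x * \<xi>)) \<longlongrightarrow> 0) at_top" "((\<lambda>x. g x * cis (x * \<xi>)) \<longlongrightarrow> 0) at_bot"
    using tendsto_norm_zero_iff[of g] lt lb
    by (auto intro!: Lim_null_comparison[where g = "\<lambda>x. norm (g x)"] tendsto_norm_zero simp: norm_mult)
  moreover have "((\<lambda>x. g x * cis (x * \<xi>)) has_vector_derivative \<phi>' x) (at x)" for x
    by (rule has_vector_derivative_eq_rhs[OF has_vector_derivative_mult[OF d has_vector_derivative_cis]])
       (simp add: \<phi>'_def algebra_simps)
  moreover have "isCont \<phi>' x" for x
    using gc' has_vector_derivative_continuous[OF d] has_vector_derivative_continuous[OF has_vector_derivative_cis]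
    unfolding \<phi>'_def by (intro continuous_intros) (auto simp: continuous_on_eq_continuous_at)
  ultimately have "integral\<^sup>L lborel \<phi>' = 0"
    using i unfolding \<phi>'_def[abs_def]
    by (intro integral_derivative_vanishing_at_infinity) (auto intro: Bochner_Integration.integrable_add)
  moreover have "integral\<^sup>L lborel \<phi>' = \<i> * complex_of_real \<xi> * fourier g \<xi> + fourier g' \<xi>"
    unfolding \<phi>'_def[abs_def] fourier_def using i by simp
  ultimately show ?thesis by (simp add: algebra_simps eq_neg_iff_add_eq_0)
qed

section \<open>Weight sequences\<close>

lemma weight_sequence_pos: "weight_sequence M \<Longrightarrow> M p > 0"
  unfolding weight_sequence_def by auto

lemma quot_seq_pos: "weight_sequence M \<Longrightarrow> quot_seq M p > 0"
  unfolding quot_seq_def by (simp add: weight_sequence_pos)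

lemma incseq_quot_seq:
  assumes M: "weight_sequence M"
  shows "incseq (quot_seq M)"
proof (rule incseq_SucI)
  fix p
  have "(M (Suc p))^2 \<le> M p * M (Suc (Suc p))"
    using M unfolding weight_sequence_def by (metis One_nat_def Suc_eq_plus1 diff_Suc_1 le_add2)
  then show "quot_seq M p \<le> quot_seq M (Suc p)"
    unfolding quot_seq_def using weight_sequence_pos[OF M]
    by (simp add: divide_simps power2_eq_square mult.commute)
qed

lemma weight_sequence_shift_le:
  assumes M: "weight_sequence M"
  shows "\<exists>L\<ge>1. \<forall>k j. M k \<le> L^j * M (k + j)"
proof (intro exI[of _ "max 1 (1 / M 1)"] conjI allI)
  let ?L = "max 1 (1 / M 1)"
  have step: "M k \<le> ?L * M (Suc k)" for k
  proof -
    have "M 1 \<le> quot_seq M k"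
      using incseqD[OF incseq_quot_seq[OF M], of 0 k] M
      unfolding quot_seq_def weight_sequence_def by simp
    then have "M k \<le> M (Suc k) / M 1"
      using weight_sequence_pos[OF M] unfolding quot_seq_def by (simp add: field_simps)
    also have "\<dots> = 1 / M 1 * M (Suc k)" by simp
    also have "\<dots> \<le> ?L * M (Suc k)"
      using weight_sequence_pos[OF M, of "Suc k"] by (intro mult_right_mono) auto
    finally show ?thesis .
  qed
  show "M k \<le> ?L^j * M (k + j)" for k j
  proof (induction j)
    case (Suc j)
    have "M k \<le> ?L^j * M (k + j)" by (rule Suc.IH)
    also have "\<dots> \<le> ?L^j * (?L * M (Suc (k + j)))" by (intro mult_left_mono step) auto
    finally show ?case by (simp add: ac_simps)
  qed simp
qed simp

lemma almost_increasing_shift_le: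
  assumes "almost_increasing A"
  shows "\<exists>\<gamma>>0. \<exists>\<beta>\<ge>1. \<forall>p j. j \<le> p \<longrightarrow> A (p - j) \<le> \<gamma> * \<beta>^p * A p"
  using assms unfolding almost_increasing_def by (metis diff_le_self mult.right_neutral order_refl power_one)

lemma geometric_lower_bound_of_liminf_root:
  assumes A_pos: "\<forall>p. A p > 0" and lim: "liminf (\<lambda>p. ereal (root p (A p))) > 0"
  obtains c r where "c > 0" "0 < r" "r \<le> 1" "\<And>j. c * r^j \<le> A j"
proof -
  obtain z where z: "0 < ereal z" "ereal z < liminf (\<lambda>p. ereal (root p (A p)))"
    using ereal_dense2[OF lim] by blast
  then obtain J where J: "\<And>p. p \<ge> J \<Longrightarrow> z < root p (A p)"
    using less_LiminfD[OF z(2)] unfolding eventually_sequentially by auto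
  define r where "r = min z 1"
  define c where "c = min 1 (Min (A ` {..J}))"
  have r: "r > 0" "r \<le> 1" "r \<le> z" and c: "c > 0" "c \<le> 1"
    using z(1) A_pos unfolding r_def c_def by auto
  have "c * r^j \<le> A j" for j
  proof (cases "j \<le> J")
    case True
    then have "c \<le> A j" unfolding c_def by (simp add: min.coboundedI2)
    moreover have "c * r^j \<le> c" using c r by (simp add: mult_left_le power_le_one)
    ultimately show ?thesis by linarith
  next
    case False
    then have "r^j \<le> root j (A j) ^ j"
      using J[of j] r by (intro power_mono) auto
    also have "\<dots> = A j" using False A_pos by (simp add: real_root_pow_pos)
    finally have "r^j \<le> A j" .
    moreover have "c * r^j \<le> r^j" using mult_left_le_one_le[of "r^j" c] c r by simp
    ultimately show ?thesis by linarith
  qed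
  then show ?thesis using that c r by blast
qed

lemma cond_alg_shift_le:
  assumes A_pos: "\<forall>p. A p > 0" and alg: "cond_alg (hat_seq A)"
    and lim: "liminf (\<lambda>p. ereal (root p (A p))) > 0"
  shows "\<exists>\<gamma>>0. \<exists>\<beta>\<ge>1. \<forall>p j. j \<le> p \<longrightarrow> A (p - j) \<le> \<gamma> * \<beta>^p * A p"
proof -
  obtain c r where c: "c > 0" and r: "0 < r" "r \<le> 1" and Ac: "\<And>j. c * r^j \<le> A j"
    using geometric_lower_bound_of_liminf_root[OF A_pos lim] by blast
  obtain C1 where C1: "C1 \<ge> 1" "\<forall>p q. hat_seq A p * hat_seq A q \<le> C1 ^ (p + q) * hat_seq A (p + q)"
    using alg unfolding cond_alg_def by auto
  have "A (p - j) \<le> 1/c * (2 * C1 / r)^p * A p" if jp: "j \<le> p" for p j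
  proof -
    have fct: "fact p = (p choose j) * (fact (p - j) * fact j :: real)"
      using binomial_fact_lemma[OF jp] by (metis (mono_tags, lifting) mult.commute of_nat_fact of_nat_mult)
    have "fact (p - j) * fact j * (A (p - j) * A j) \<le> C1 ^ p * fact p * A p"
      using C1(2)[rule_format, of "p - j" j] jp unfolding hat_seq_def by (simp add: ac_simps)
    then have "(fact (p - j) * fact j) * (A (p - j) * A j)
        \<le> (fact (p - j) * fact j) * (C1 ^ p * (p choose j) * A p)"
      unfolding fct by (simp add: ac_simps)
    then have "A (p - j) * A j \<le> C1 ^ p * (p choose j) * A p"
      by (simp add: mult_le_cancel_left_pos)
    also have "\<dots> \<le> C1 ^ p * 2^p * A p"
      using binomial_le_pow2[of p j] C1(1) A_pos
      by (intro mult_right_mono mult_left_mono) (auto simp: less_imp_le simp flip: of_nat_le_iff)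
    finally have "A (p - j) * A j \<le> (2 * C1)^p * A p" by (simp add: power_mult_distrib mult.commute)
    moreover have "A (p - j) * (c * r^j) \<le> A (p - j) * A j"
      using Ac[of j] A_pos by (intro mult_left_mono) (auto simp: less_imp_le)
    ultimately have "A (p - j) \<le> (2 * C1)^p * A p / (c * r^j)"
      using c r by (simp add: pos_le_divide_eq)
    also have "\<dots> = 1/c * ((2 * C1)^p / r^j) * A p" by simp
    also have "\<dots> \<le> 1/c * (2 * C1 / r)^p * A p"
    proof (intro mult_right_mono mult_left_mono)
      show "(2 * C1)^p / r^j \<le> (2 * C1 / r)^p"
        using r jp C1 by (simp add: power_divide divide_left_mono power_decreasing)
    qed (use c A_pos in \<open>auto simp: less_imp_le\<close>)
    finally show ?thesis .
  qed
  moreover have "2 * C1 / r \<ge> 1" using C1 r by (simp add: field_simps)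
  ultimately show ?thesis using c by (intro exI[of _ "1/c"] exI[of _ "2 * C1 / r"]) auto
qed

lemma shift_le_of_A_cond:
  assumes "\<forall>p. A p > 0"
    and "almost_increasing A \<or> (liminf (\<lambda>p. ereal (root p (A p))) > 0 \<and> cond_alg (hat_seq A))"
  shows "\<exists>\<gamma>>0. \<exists>\<beta>\<ge>1. \<forall>p j. j \<le> p \<longrightarrow> A (p - j) \<le> \<gamma> * \<beta>^p * A p"
  using assms almost_increasing_shift_le cond_alg_shift_le by blast

section \<open>Moments of derivatives\<close>

definition pow_vder :: "(real \<Rightarrow> complex) \<Rightarrow> nat \<Rightarrow> nat \<Rightarrow> real \<Rightarrow> complex" where
  "pow_vder f k s x = complex_of_real (x^k) * vder f s x"

lemma norm_pow_vder_add: "norm (pow_vder f (k + j) s x) = \<bar>x\<bar>^j * norm (pow_vder f k s x)"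
  unfolding pow_vder_def by (simp add: norm_mult norm_power power_add)

lemma pow_vder_bound:
  assumes "f \<in> S_space N B h" "\<forall>p. N p > 0" "\<forall>q. B q > 0" "h > 0"
  shows "norm (pow_vder f k s x) \<le> S_norm N B h f * (h^(k+s) * N k * B s)"
  using S_norm_bound[OF assms(1), of k s x] assms(2-4) unfolding pow_vder_def by simp

lemma continuous_on_pow_vder: "smooth_fun f \<Longrightarrow> continuous_on UNIV (pow_vder f k s)"
  unfolding pow_vder_def[abs_def] using continuous_on_vder[of f s] by (intro continuous_intros) auto

lemma integrable_pow_vder:
  assumes f: "f \<in> S_space N B h" and pos: "\<forall>p. N p > 0" "\<forall>q. B q > 0" "h > 0"
  shows "integrable lborel (pow_vder f k s)"
proof (rule integrable_of_square_decay)
  show "pow_vder f k s \<in> borel_measurable lborel"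
    using f continuous_on_pow_vder unfolding S_space_def by (simp add: borel_measurable_continuous_onI)
  show "norm (pow_vder f k s x) \<le> S_norm N B h f * (h^(k+s) * N k * B s)" for x
    by (rule pow_vder_bound[OF f pos])
  show "x^2 * norm (pow_vder f k s x) \<le> S_norm N B h f * (h^(k+2+s) * N (k+2) * B s)" for x
    using pow_vder_bound[OF f pos, of "k+2" s x] norm_pow_vder_add[of f k 2 s x] by simp
qed

lemma integrable_of_S_ind:
  assumes "u \<in> S_ind N B" "\<forall>p. N p > 0" "\<forall>q. B q > 0"
  shows "integrable lborel u"
  using assms integrable_pow_vder[of u N B _ 0 0] unfolding S_ind_def pow_vder_def[abs_def] by auto

lemma integral_norm_pow_vder_le:
  assumes f: "f \<in> S_space M B h" and M: "weight_sequence M" and B: "\<forall>q. B q > 0" and h: "h > 0"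
  shows "integral\<^sup>L lborel (\<lambda>x. norm (pow_vder f k s x))
    \<le> S_norm M B h f * (h^(k+s+1) * M (k+1) * B s) * (4*pi + 2 * ln (quot_seq M (k+1) / quot_seq M k))"
proof -
  have pos: "\<forall>p. M p > 0" using weight_sequence_pos[OF M] by auto
  have m: "quot_seq M k > 0" "quot_seq M k \<le> quot_seq M (k+1)"
    using quot_seq_pos[OF M] incseqD[OF incseq_quot_seq[OF M]] by auto
  have "M k > 0" "M (k+1) > 0" using pos by auto
  then have M1: "M (k+1) = quot_seq M k * M k" and M2: "M (k+2) = quot_seq M (k+1) * M (k+1)"
    unfolding quot_seq_def by (simp_all add: numeral_2_eq_2)
  let ?c = "S_norm M B h f * (h^(k+s+1) * M (k+1) * B s)"
  have "integral\<^sup>L lborel (\<lambda>x. norm (pow_vder f k s x))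
      \<le> ?c * (4*pi + 2 * ln (h * quot_seq M (k+1) / (h * quot_seq M k)))"
  proof (rule integral_norm_le_moment_bound[OF integrable_pow_vder[OF f pos B h]])
    show "0 < h * quot_seq M k" "h * quot_seq M k \<le> h * quot_seq M (k+1)" using m h by auto
    show "?c \<ge> 0" using S_norm_nonneg[OF f] pos B h by (intro mult_nonneg_nonneg) (auto simp: less_imp_le)
    show "h * quot_seq M k * norm (pow_vder f k s x) \<le> ?c" for x
      using mult_left_mono[OF pow_vder_bound[OF f pos B h, of k s x], of "h * quot_seq M k"] m h
      unfolding M1 by (simp add: ac_simps)
    show "\<bar>x\<bar> * norm (pow_vder f k s x) \<le> ?c" for x
      using pow_vder_bound[OF f pos B h, of "k+1" s x] norm_pow_vder_add[of f k 1 s x]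
      by (simp add: ac_simps)
    show "x^2 * norm (pow_vder f k s x) \<le> ?c * (h * quot_seq M (k+1))" for x
      using pow_vder_bound[OF f pos B h, of "k+2" s x] norm_pow_vder_add[of f k 2 s x] unfolding M2
      by (simp add: ac_simps)
  qed
  then show ?thesis using h by simp
qed

lemma has_vector_derivative_pow_vder:
  assumes "smooth_fun f"
  shows "(pow_vder f k s has_vector_derivative (of_nat k * pow_vder f (k - 1) s x + pow_vder f k (Suc s) x)) (at x)"
proof -
  have "((\<lambda>x. complex_of_real (x^k) * vder f s x) has_vector_derivative
      (complex_of_real (x^k) * vder f (Suc s) x + complex_of_real (real k * x^(k - Suc 0)) * vder f s x)) (at x)"
    by (intro has_vector_derivative_mult has_vector_derivative_of_real DERIV_pow vder_has_vector_derivative assms)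
  then show ?thesis unfolding pow_vder_def[abs_def] by (simp add: algebra_simps)
qed

lemma tendsto_0_at_infinity_of_decay:
  fixes g :: "real \<Rightarrow> complex"
  assumes "\<And>x. \<bar>x\<bar> * norm (g x) \<le> c"
  shows "(g \<longlongrightarrow> 0) at_infinity"
proof (rule Lim_null_comparison)
  show "\<forall>\<^sub>F x in at_infinity. norm (g x) \<le> c * norm (inverse x)"
    using assms eventually_at_infinity[of "\<lambda>x. x \<noteq> 0"]
    by (auto elim!: eventually_mono intro: exI[of _ 1] simp: field_simps)
  show "((\<lambda>x::real. c * norm (inverse x)) \<longlongrightarrow> 0) at_infinity"
    by (rule tendsto_mult_right_zero[OF tendsto_norm_zero[OF tendsto_inverse_0]])
qed

lemma fourier_pow_vder_recurrence:
  assumes f: "f \<in> S_space N B h" and pos: "\<forall>p. N p > 0" "\<forall>q. B q > 0" "h > 0"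
  shows "\<bar>\<xi>\<bar> * norm (fourier (pow_vder f k s) \<xi>) \<le>
          real k * norm (fourier (pow_vder f (k - 1) s) \<xi>) + norm (fourier (pow_vder f k (Suc s)) \<xi>)"
proof -
  have sf: "smooth_fun f" using f unfolding S_space_def by auto
  note I = integrable_pow_vder[OF f pos]
  have lim: "(pow_vder f k s \<longlongrightarrow> 0) at_infinity"
    using pow_vder_bound[OF f pos, of "Suc k" s] norm_pow_vder_add[of f k 1 s]
    by (intro tendsto_0_at_infinity_of_decay) simp
  have "fourier (\<lambda>x. of_nat k * pow_vder f (k - 1) s x + pow_vder f k (Suc s) x) \<xi>
      = - (\<i> * complex_of_real \<xi>) * fourier (pow_vder f k s) \<xi>"
    using I continuous_on_pow_vder[OF sf] tendsto_mono[OF at_top_le_at_infinity lim]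
      tendsto_mono[OF at_bot_le_at_infinity lim]
    by (intro fourier_of_derivative has_vector_derivative_pow_vder[OF sf] continuous_intros
        Bochner_Integration.integrable_add integrable_mult_right) auto
  moreover have "fourier (\<lambda>x. of_nat k * pow_vder f (k - 1) s x + pow_vder f k (Suc s) x) \<xi>
      = of_nat k * fourier (pow_vder f (k - 1) s) \<xi> + fourier (pow_vder f k (Suc s)) \<xi>"
    using fourier_lincomb[OF I I, of "of_nat k" _ _ 1] by simp
  ultimately have "\<bar>\<xi>\<bar> * norm (fourier (pow_vder f k s) \<xi>)
      = norm (of_nat k * fourier (pow_vder f (k - 1) s) \<xi> + fourier (pow_vder f k (Suc s)) \<xi>)"
    by (metis norm_minus_cancel norm_mult norm_ii norm_of_real mult_1)
  then show ?thesis by (metis norm_triangle_ineq norm_mult norm_of_nat)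
qed

lemma vder_fourier_S_space:
  assumes f: "f \<in> S_space N B h" and pos: "\<forall>p. N p > 0" "\<forall>q. B q > 0" "h > 0"
  shows "vder (fourier f) q = (\<lambda>\<xi>. \<i>^q * fourier (pow_vder f q 0) \<xi>)"
    and "smooth_fun (fourier f)"
proof -
  have mom: "integrable lborel (\<lambda>x. complex_of_real x ^ k * f x)" for k
    using integrable_pow_vder[OF f pos, of k 0] by (simp add: pow_vder_def[abs_def])
  have "(\<lambda>x. (\<i> * complex_of_real x)^q * f x) = (\<lambda>x. \<i>^q * pow_vder f q 0 x)"
    by (simp add: fun_eq_iff pow_vder_def power_mult_distrib mult.assoc)
  then show "vder (fourier f) q = (\<lambda>\<xi>. \<i>^q * fourier (pow_vder f q 0) \<xi>)"
    using vder_fourier(1)[OF mom, of q] by (simp add: fun_eq_iff fourier_cmult)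
  show "smooth_fun (fourier f)" by (rule vder_fourier(2)[OF mom])
qed

section \<open>The Leibniz estimate\<close>

lemma falling_factorial_Suc:
  "real q * (real (q - 1 choose j) * fact j) = real (q choose Suc j) * fact (Suc j)"
proof (cases q)
  case (Suc n)
  have "real (Suc n) * real (n choose j) = real (Suc n choose Suc j) * real (Suc j)"
    by (simp only: of_nat_mult[symmetric] Suc_times_binomial_eq)
  then show ?thesis using Suc by (simp del: binomial_Suc_Suc of_nat_Suc add: fact_Suc algebra_simps)
qed simp

lemma sum_binomial_Pascal:
  "(\<Sum>j\<le>p. real (p choose j) * X (Suc j)) + (\<Sum>j\<le>p. real (p choose j) * X j)
     = (\<Sum>j\<le>Suc p. real (Suc p choose j) * X j)"
proof -
  have "(\<Sum>j\<le>p. real (p choose j) * X j) = (\<Sum>j\<le>Suc p. real (p choose j) * X j)" by simp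
  also have "\<dots> = X 0 + (\<Sum>j\<le>p. real (p choose Suc j) * X (Suc j))"
    by (subst sum.atMost_Suc_shift) simp
  moreover have "(\<Sum>j\<le>Suc p. real (Suc p choose j) * X j)
      = X 0 + (\<Sum>j\<le>p. real (p choose j) * X (Suc j)) + (\<Sum>j\<le>p. real (p choose Suc j) * X (Suc j))"
    by (subst sum.atMost_Suc_shift) (simp add: sum.distrib algebra_simps)
  ultimately show ?thesis by (simp add: binomial_eq_0)
qed

text \<open>The Leibniz rule for D^p(x^q f^(r)) in inequality form: \<open>rec\<close> is the identity
  D(x^k f^(s)) = k x^(k-1) f^(s) + x^k f^(s+1) seen through the Fourier transform, and
  (q choose j) j! is the falling factorial q!/(q-j)!.\<close>
lemma iterated_recurrence_bound:
  fixes F T :: "nat \<Rightarrow> nat \<Rightarrow> real" and y :: real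
  assumes y: "y \<ge> 0"
    and rec: "\<And>k s. y * F k s \<le> real k * F (k - 1) s + F k (Suc s)"
    and base: "\<And>k s. F k s \<le> T k s"
  shows "y^p * F q r \<le> (\<Sum>j\<le>p. real (p choose j) * (real (q choose j) * fact j) * T (q - j) (r + p - j))"
proof (induction p arbitrary: q r)
  case (Suc p)
  define X where "X i = real (q choose i) * fact i * T (q - i) (r + Suc p - i)" for i
  have "y^(Suc p) * F q r \<le> y^p * (real q * F (q - 1) r + F q (Suc r))"
    using mult_left_mono[OF rec zero_le_power[OF y]] by (simp add: ac_simps)
  also have "\<dots> = real q * (y^p * F (q - 1) r) + y^p * F q (Suc r)" by (simp add: algebra_simps)
  also have "\<dots> \<le> real q * (\<Sum>j\<le>p. real (p choose j) * (real (q - 1 choose j) * fact j) * T (q - 1 - j) (r + p - j))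
      + (\<Sum>j\<le>p. real (p choose j) * (real (q choose j) * fact j) * T (q - j) (Suc r + p - j))"
    using Suc.IH[of "q - 1" r] Suc.IH[of q "Suc r"] by (intro add_mono mult_left_mono) auto
  also have "\<dots> = (\<Sum>j\<le>p. real (p choose j) * X (Suc j)) + (\<Sum>j\<le>p. real (p choose j) * X j)"
  proof -
    have summand: "real q * (real (p choose j) * (real (q - 1 choose j) * fact j) * T (q - 1 - j) (r + p - j))
        = real (p choose j) * X (Suc j)" for j
    proof -
      have "real q * (real (p choose j) * (real (q - 1 choose j) * fact j) * T (q - 1 - j) (r + p - j))
          = real (p choose j) * (real q * (real (q - 1 choose j) * fact j)) * T (q - 1 - j) (r + p - j)"
        by (simp only: ac_simps)
      also have "\<dots> = real (p choose j) * X (Suc j)"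
        unfolding falling_factorial_Suc X_def by simp
      finally show ?thesis .
    qed
    show ?thesis unfolding sum_distrib_left summand by (simp add: X_def ac_simps)
  qed
  also have "\<dots> = (\<Sum>j\<le>Suc p. real (Suc p choose j) * X j)"
    by (rule sum_binomial_Pascal)
  also have "\<dots> = (\<Sum>j\<le>Suc p. real (Suc p choose j) * (real (q choose j) * fact j) * T (q - j) (r + Suc p - j))"
    unfolding X_def by (simp add: mult.assoc)
  finally show ?case .
qed (simp add: base)

lemma leibniz_term_le:
  fixes A M :: "nat \<Rightarrow> real"
  assumes j: "j \<le> p" "j \<le> q"
    and T: "T \<le> NF * (h^((q-j)+(p-j)+1) * M ((q-j)+1) * (fact (p-j) * A (p-j))) * (4*pi + 2*(C0*H^((q-j)+1)))"
    and Msh: "M ((q-j)+1) \<le> L^p * M (q+1)" and Ash: "A (p-j) \<le> \<gamma> * \<beta>^p * A p"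
    and pos: "NF \<ge> 0" "h \<ge> 1" "H \<ge> 1" "C0 > 0" "L \<ge> 0" "\<gamma> \<ge> 0" "\<beta> \<ge> 0"
      "\<forall>p. A p > 0" "\<forall>p. M p > 0"
  shows "real (p choose j) * (real (q choose j) * fact j) * T
    \<le> (fact p * NF) * (2^q * h^(p+q+1) * (L^p * M (q+1)) * (\<gamma> * \<beta>^p * A p) * ((4*pi+2*C0) * H^(q+1)))"
proof -
  have fct: "real (p choose j) * fact j * fact (p - j) = fact p"
    using binomial_fact_lemma[OF j(1)]
    by (metis (mono_tags, lifting) mult.commute mult.left_commute of_nat_fact of_nat_mult)
  have nonneg: "0 \<le> L^p * M (q+1)" "0 \<le> \<gamma> * \<beta>^p * A p" "0 \<le> M ((q-j)+1)" "0 \<le> A (p-j)"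
    "0 \<le> h^((q-j)+(p-j)+1)" "0 \<le> fact p * NF" "0 \<le> h" "0 \<le> H"
    using pos by (simp_all add: less_imp_le)
  have "real (p choose j) * (real (q choose j) * fact j) * T
      \<le> real (p choose j) * (real (q choose j) * fact j)
        * (NF * (h^((q-j)+(p-j)+1) * M ((q-j)+1) * (fact (p-j) * A (p-j))) * (4*pi + 2*(C0*H^((q-j)+1))))"
    using T by (intro mult_left_mono) auto
  also have "\<dots> = (fact p * NF) * (real (q choose j) * h^((q-j)+(p-j)+1) * M ((q-j)+1) * A (p-j)
      * (4*pi + 2*(C0*H^((q-j)+1))))"
    unfolding fct[symmetric] by (simp add: ac_simps)
  also have "\<dots> \<le> (fact p * NF) * (2^q * h^(p+q+1) * (L^p * M (q+1)) * (\<gamma> * \<beta>^p * A p) * ((4*pi+2*C0) * H^(q+1)))"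
  proof (intro mult_left_mono mult_mono)
    show "real (q choose j) \<le> 2^q"
      using binomial_le_pow2[of q j] by (simp flip: of_nat_le_iff)
    show "h^((q-j)+(p-j)+1) \<le> h^(p+q+1)" using pos by (intro power_increasing) auto
    have "1 \<le> H^(q+1)" using pos by (intro one_le_power) auto
    then have "4*pi \<le> 4*pi * H^(q+1)" by simp
    moreover have "C0 * H^((q-j)+1) \<le> C0 * H^(q+1)"
      using pos by (intro mult_left_mono power_increasing) auto
    moreover have "(4*pi+2*C0) * H^(q+1) = 4*pi * H^(q+1) + 2 * (C0 * H^(q+1))"
      by (simp add: algebra_simps)
    ultimately show "4*pi + 2*(C0*H^((q-j)+1)) \<le> (4*pi+2*C0) * H^(q+1)" by linarith
  qed (use Msh Ash pos nonneg in \<open>simp_all add: mult_nonneg_nonneg\<close>)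
  finally show ?thesis .
qed

lemma geometric_factor_le:
  fixes \<beta> L H :: real
  assumes "\<beta> \<ge> 1" "L \<ge> 1" "H \<ge> 1"
  shows "(2*\<beta>*L)^p * (2*H)^q \<le> (4*\<beta>*L*H)^(p+q)"
proof -
  have "1 \<le> \<beta> * L" using assms by (metis mult_mono' mult_1 zero_le_one)
  then have "2*\<beta>*L * 1 \<le> 2*\<beta>*L * (2*H)" "2*H * 1 \<le> 2*H * (2*(\<beta>*L))"
    using assms by (intro mult_left_mono; simp)+
  then have "2*\<beta>*L \<le> 4*\<beta>*L*H" "2*H \<le> 4*\<beta>*L*H" by (simp_all add: ac_simps)
  then have "(2*\<beta>*L)^p \<le> (4*\<beta>*L*H)^p" "(2*H)^q \<le> (4*\<beta>*L*H)^q"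
    using assms by (intro power_mono; simp)+
  then have "(2*\<beta>*L)^p * (2*H)^q \<le> (4*\<beta>*L*H)^p * (4*\<beta>*L*H)^q"
    by (rule mult_mono) (use assms in simp_all)
  then show ?thesis by (simp add: power_add)
qed

lemma leibniz_sum_le:
  fixes T :: "nat \<Rightarrow> nat \<Rightarrow> real" and A M :: "nat \<Rightarrow> real"
  assumes Tb: "\<And>k s. T k s \<le> NF * (h^(k+s+1) * M (k+1) * (fact s * A s)) * (4*pi + 2*(C0*H^(k+1)))"
    and Msh: "\<And>k j. M k \<le> L^j * M (k+j)"
    and Ash: "\<And>p j. j \<le> p \<Longrightarrow> A (p-j) \<le> \<gamma> * \<beta>^p * A p"
    and pos: "NF \<ge> 0" "h \<ge> 1" "L \<ge> 1" "\<beta> \<ge> 1" "H \<ge> 1" "C0 > 0" "\<gamma> > 0" "\<forall>p. A p > 0" "\<forall>p. M p > 0"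
  shows "(\<Sum>j\<le>p. real (p choose j) * (real (q choose j) * fact j) * T (q-j) (p-j))
          \<le> (\<gamma>*(4*pi+2*C0)*H*h*NF) * ((4*\<beta>*L*H*h)^(p+q) * (fact p * A p) * M (q+1))"
proof -
  define D where "D = (fact p * NF) * (2^q * h^(p+q+1) * (L^p * M (q+1)) * (\<gamma> * \<beta>^p * A p) * ((4*pi+2*C0) * H^(q+1)))"
  have D: "D \<ge> 0" unfolding D_def using pos by (intro mult_nonneg_nonneg) (auto intro: less_imp_le)
  have "real (p choose j) * (real (q choose j) * fact j) * T (q-j) (p-j) \<le> D" if j: "j \<le> p" for j
  proof (cases "j \<le> q")
    case True
    have "M ((q-j)+1) \<le> L^j * M (q+1)" using Msh[of "(q-j)+1" j] True by simp
    also have "\<dots> \<le> L^p * M (q+1)" using pos j by (intro mult_right_mono power_increasing) (auto intro: less_imp_le)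
    finally have Mj: "M ((q-j)+1) \<le> L^p * M (q+1)" .
    show ?thesis
      unfolding D_def by (rule leibniz_term_le[OF j True Tb Mj Ash[OF j]]) (use pos in auto)
  next
    case False
    then have "real (q choose j) = 0" by (simp add: binomial_eq_0)
    then show ?thesis using D by (simp only: mult_zero_left mult_zero_right)
  qed
  then have "(\<Sum>j\<le>p. real (p choose j) * (real (q choose j) * fact j) * T (q-j) (p-j))
      \<le> of_nat (card {..p}) * D"
    by (intro sum_bounded_above) auto
  also have "\<dots> = real (Suc p) * D" by simp
  also have "\<dots> \<le> 2^p * D"
  proof (rule mult_right_mono[OF _ D])
    show "real (Suc p) \<le> 2^p"
      using Suc_leI[OF less_exp[of p]] by (metis of_nat_le_iff of_nat_numeral of_nat_power)
  qed
  also have "\<dots> = (\<gamma>*(4*pi+2*C0)*H*h*NF) * (fact p * A p * M (q+1)) * ((2*\<beta>*L)^p * (2*H)^q * h^(p+q))"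
    unfolding D_def by (simp add: power_mult_distrib power_add ac_simps)
  also have "\<dots> \<le> (\<gamma>*(4*pi+2*C0)*H*h*NF) * (fact p * A p * M (q+1)) * ((4*\<beta>*L*H)^(p+q) * h^(p+q))"
    using geometric_factor_le[of \<beta> L H p q] pos
    by (intro mult_left_mono mult_right_mono) (auto intro!: mult_nonneg_nonneg intro: less_imp_le)
  also have "\<dots> = (\<gamma>*(4*pi+2*C0)*H*h*NF) * ((4*\<beta>*L*H*h)^(p+q) * (fact p * A p) * M (q+1))"
    by (simp add: power_mult_distrib ac_simps)
  finally show ?thesis .
qed

section \<open>The Fourier transform on the spaces\<close>

lemma norm_fourier_vder_le:
  fixes M A :: "nat \<Rightarrow> real"
  assumes M: "weight_sequence M" and A_pos: "\<forall>p. A p > 0"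
    and C0: "C0 > 0" and H: "H \<ge> 1" and sm: "\<And>p. ln (quot_seq M (p + 1) / quot_seq M p) \<le> C0 * H ^ (p + 1)"
    and \<gamma>: "\<gamma> > 0" and \<beta>: "\<beta> \<ge> 1" and Ash: "\<And>p j. j \<le> p \<Longrightarrow> A (p - j) \<le> \<gamma> * \<beta>^p * A p"
    and L: "L \<ge> 1" and Msh: "\<And>k j. M k \<le> L^j * M (k + j)"
    and f: "f \<in> S_space M (hat_seq A) h" and h: "h \<ge> 1"
  shows "norm (complex_of_real (\<xi>^p) * vder (fourier f) q \<xi>)
    \<le> (\<gamma>*(4*pi+2*C0)*H*h*S_norm M (hat_seq A) h f) * ((4*\<beta>*L*H*h)^(p+q) * hat_seq A p * shift1 M q)"
proof -
  have Mp: "\<forall>p. M p > 0" using weight_sequence_pos[OF M] by auto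
  have hp: "\<forall>q. hat_seq A q > 0" using A_pos unfolding hat_seq_def by simp
  have h0: "h > 0" using h by simp
  define NF where "NF = S_norm M (hat_seq A) h f"
  have NF: "NF \<ge> 0" unfolding NF_def using S_norm_nonneg[OF f] Mp hp h0 by auto
  define F where "F k s = norm (fourier (pow_vder f k s) \<xi>)" for k s
  define T where "T k s = integral\<^sup>L lborel (\<lambda>x. norm (pow_vder f k s x))" for k s
  have "norm (complex_of_real (\<xi>^p) * vder (fourier f) q \<xi>) = \<bar>\<xi>\<bar>^p * F q 0"
    unfolding vder_fourier_S_space(1)[OF f Mp hp h0] F_def by (simp add: norm_mult norm_power)
  also have "\<dots> \<le> (\<Sum>j\<le>p. real (p choose j) * (real (q choose j) * fact j) * T (q - j) (0 + p - j))"
  proof (rule iterated_recurrence_bound)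
    show "\<bar>\<xi>\<bar> * F k s \<le> real k * F (k - 1) s + F k (Suc s)" for k s
      unfolding F_def by (rule fourier_pow_vder_recurrence[OF f Mp hp h0])
    show "F k s \<le> T k s" for k s
      unfolding F_def T_def by (rule fourier_norm_le)
  qed simp
  also have "\<dots> = (\<Sum>j\<le>p. real (p choose j) * (real (q choose j) * fact j) * T (q - j) (p - j))"
    by simp
  also have "\<dots> \<le> (\<gamma>*(4*pi+2*C0)*H*h*NF) * ((4*\<beta>*L*H*h)^(p+q) * (fact p * A p) * M (q+1))"
  proof (rule leibniz_sum_le[OF _ Msh Ash])
    show "T k s \<le> NF * (h^(k+s+1) * M (k+1) * (fact s * A s)) * (4*pi + 2*(C0*H^(k+1)))" for k s
    proof -
      have "0 \<le> NF * (h^(k+s+1) * M (k+1) * (fact s * A s))"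
        using NF Mp A_pos h0 by (intro mult_nonneg_nonneg) (auto simp: less_imp_le)
      then have "NF * (h^(k+s+1) * M (k+1) * (fact s * A s)) * (4*pi + 2 * ln (quot_seq M (k+1) / quot_seq M k))
          \<le> NF * (h^(k+s+1) * M (k+1) * (fact s * A s)) * (4*pi + 2*(C0*H^(k+1)))"
        using sm[of k] by (intro mult_left_mono) simp_all
      then show ?thesis
        using integral_norm_pow_vder_le[OF f M hp h0, of k s] unfolding T_def NF_def hat_seq_def
        by linarith
    qed
  qed (use NF h L \<beta> H C0 \<gamma> A_pos Mp in auto)
  finally show ?thesis unfolding NF_def hat_seq_def shift1_def by (simp add: ac_simps)
qed

lemma fourier_S_space_bound:
  fixes M A :: "nat \<Rightarrow> real"
  assumes M: "weight_sequence M" and A_pos: "\<forall>p. A p > 0"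
    and C0: "C0 > 0" and H: "H \<ge> 1" and sm: "\<And>p. ln (quot_seq M (p + 1) / quot_seq M p) \<le> C0 * H ^ (p + 1)"
    and \<gamma>: "\<gamma> > 0" and \<beta>: "\<beta> \<ge> 1" and Ash: "\<And>p j. j \<le> p \<Longrightarrow> A (p - j) \<le> \<gamma> * \<beta>^p * A p"
    and L: "L \<ge> 1" and Msh: "\<And>k j. M k \<le> L^j * M (k + j)"
    and f: "f \<in> S_space M (hat_seq A) h" and h: "h \<ge> 1"
  shows "fourier f \<in> S_space (hat_seq A) (shift1 M) (4*\<beta>*L*H*h)"
    and "S_norm (hat_seq A) (shift1 M) (4*\<beta>*L*H*h) (fourier f)
           \<le> \<gamma>*(4*pi+2*C0)*H * h * S_norm M (hat_seq A) h f"
proof -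
  have "\<forall>p. M p > 0" "\<forall>q. hat_seq A q > 0" "\<forall>q. shift1 M q > 0"
    using weight_sequence_pos[OF M] A_pos unfolding hat_seq_def shift1_def by auto
  with S_space_boundI[OF vder_fourier_S_space(2)[OF f] norm_fourier_vder_le[OF assms]] \<beta> L H h
  show "fourier f \<in> S_space (hat_seq A) (shift1 M) (4*\<beta>*L*H*h)"
    and "S_norm (hat_seq A) (shift1 M) (4*\<beta>*L*H*h) (fourier f)
           \<le> \<gamma>*(4*pi+2*C0)*H * h * S_norm M (hat_seq A) h f"
    by (auto simp: ac_simps)
qed

lemma fourier_S_space_estimate:
  fixes M A :: "nat \<Rightarrow> real"
  assumes M: "weight_sequence M" and M_sm: "cond_sm M" and A_pos: "\<forall>p. A p > 0"
    and A_cond: "almost_increasing A \<or> (liminf (\<lambda>p. ereal (root p (A p))) > 0 \<and> cond_alg (hat_seq A))"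
  shows "\<exists>a>0. \<exists>K>0. \<forall>h\<ge>1. \<forall>u\<in>S_space M (hat_seq A) h.
    fourier u \<in> S_space (hat_seq A) (shift1 M) (a * h) \<and>
    S_norm (hat_seq A) (shift1 M) (a * h) (fourier u) \<le> K * h * S_norm M (hat_seq A) h u"
proof -
  obtain C0 H where C0: "C0 > 0" and H: "H > 1"
    and sm: "\<And>p. ln (quot_seq M (p + 1) / quot_seq M p) \<le> C0 * H ^ (p + 1)"
    using M_sm unfolding cond_sm_def by blast
  obtain \<gamma> \<beta> where \<gamma>: "\<gamma> > 0" and \<beta>: "\<beta> \<ge> 1" and Ash: "\<And>p j. j \<le> p \<Longrightarrow> A (p - j) \<le> \<gamma> * \<beta>^p * A p"
    using shift_le_of_A_cond[OF A_pos A_cond] by blast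
  obtain L where L: "L \<ge> 1" and Msh: "\<And>k j. M k \<le> L^j * M (k + j)"
    using weight_sequence_shift_le[OF M] by blast
  note bound = fourier_S_space_bound[OF M A_pos C0 _ sm \<gamma> \<beta> Ash L Msh]
  show ?thesis
    using bound H \<gamma> \<beta> L C0
    by (intro exI[of _ "4*\<beta>*L*H"] exI[of _ "\<gamma>*(4*pi+2*C0)*H"] conjI allI impI ballI)
       (auto simp: ac_simps intro!: mult_pos_pos add_pos_pos)
qed

lemma inv_fourier_estimate:
  assumes pos: "\<forall>p. NY p > 0" "\<forall>q. BY q > 0" and a: "a > 0"
    and est: "\<forall>h\<ge>1. \<forall>u\<in>S_space NX BX h. fourier u \<in> S_space NY BY (a * h) \<and>
               S_norm NY BY (a * h) (fourier u) \<le> K * h * S_norm NX BX h u"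
  shows "\<forall>h\<ge>1. \<forall>u\<in>S_space NX BX h. inv_fourier u \<in> S_space NY BY (a * h) \<and>
           S_norm NY BY (a * h) (inv_fourier u) \<le> K / (2*pi) * h * S_norm NX BX h u"
proof (intro allI impI ballI conjI)
  fix h u assume h: "h \<ge> 1" and u: "u \<in> S_space NX BX h"
  have inv: "inv_fourier u = (\<lambda>\<xi>. complex_of_real (1 / (2 * pi)) * fourier u (- \<xi>))"
    unfolding inv_fourier_def by auto
  note R = S_space_reflect[of "fourier u" NY BY "a * h" "1 / (2 * pi)"]
  show "inv_fourier u \<in> S_space NY BY (a * h)"
    unfolding inv using R(1) est h u pos a by auto
  have "S_norm NY BY (a * h) (inv_fourier u) \<le> 1 / (2 * pi) * S_norm NY BY (a * h) (fourier u)"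
    unfolding inv using R(2) est h u pos a by auto
  also have "\<dots> \<le> 1 / (2 * pi) * (K * h * S_norm NX BX h u)"
    using est h u by (intro mult_left_mono) auto
  finally show "S_norm NY BY (a * h) (inv_fourier u) \<le> K / (2*pi) * h * S_norm NX BX h u" by simp
qed

lemma fourier_lincomb_S_ind:
  assumes "u \<in> S_ind N B" "v \<in> S_ind N B" "\<forall>p. N p > 0" "\<forall>q. B q > 0"
  shows "fourier (\<lambda>x. c * u x + d * v x) = (\<lambda>\<xi>. c * fourier u \<xi> + d * fourier v \<xi>)"
    and "inv_fourier (\<lambda>x. c * u x + d * v x) = (\<lambda>\<xi>. c * inv_fourier u \<xi> + d * inv_fourier v \<xi>)"
proof -
  have "integrable lborel u" "integrable lborel v"
    using assms integrable_of_S_ind by auto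
  note L = fourier_lincomb[OF this]
  show "fourier (\<lambda>x. c * u x + d * v x) = (\<lambda>\<xi>. c * fourier u \<xi> + d * fourier v \<xi>)"
    by (simp add: fun_eq_iff L)
  show "inv_fourier (\<lambda>x. c * u x + d * v x) = (\<lambda>\<xi>. c * inv_fourier u \<xi> + d * inv_fourier v \<xi>)"
    by (simp add: fun_eq_iff inv_fourier_def L algebra_simps)
qed

theorem proposition2p8:
  fixes M A :: "nat \<Rightarrow> real"
  assumes M_weight: "weight_sequence M"
    and M_sm: "cond_sm M"
    and A_pos: "\<forall>p. A p > 0"
    and A_cond: "almost_increasing A \<or>
                 (liminf (\<lambda>p. ereal (root p (A p))) > 0 \<and> cond_alg (hat_seq A))"
  shows "(\<exists>a>0. \<forall>h\<ge>1.
            fourier ` S_space M (hat_seq A) h \<subseteq> S_space (hat_seq A) (shift1 M) (a * h) \<and>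
            continuous_map (S_top M (hat_seq A) h) (S_top (hat_seq A) (shift1 M) (a * h)) fourier)
       \<and> (fourier ` S_ind M (hat_seq A) \<subseteq> S_ind (hat_seq A) (shift1 M) \<and>
            continuous_map (S_ind_top M (hat_seq A)) (S_ind_top (hat_seq A) (shift1 M)) fourier)
       \<and> (\<exists>a>0. \<forall>h\<ge>1.
            inv_fourier ` S_space M (hat_seq A) h \<subseteq> S_space (hat_seq A) (shift1 M) (a * h) \<and>
            continuous_map (S_top M (hat_seq A) h) (S_top (hat_seq A) (shift1 M) (a * h)) inv_fourier)
       \<and> (inv_fourier ` S_ind M (hat_seq A) \<subseteq> S_ind (hat_seq A) (shift1 M) \<and>
            continuous_map (S_ind_top M (hat_seq A)) (S_ind_top (hat_seq A) (shift1 M)) inv_fourier)"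
proof -
  have M_pos: "\<forall>p. M p > 0" and hat_pos: "\<forall>q. hat_seq A q > 0" and shift_pos: "\<forall>q. shift1 M q > 0"
    using weight_sequence_pos[OF M_weight] A_pos unfolding hat_seq_def shift1_def by auto
  obtain a K where a: "a > 0" and K: "K > 0"
    and est: "\<forall>h\<ge>1. \<forall>u\<in>S_space M (hat_seq A) h. fourier u \<in> S_space (hat_seq A) (shift1 M) (a * h) \<and>
               S_norm (hat_seq A) (shift1 M) (a * h) (fourier u) \<le> K * h * S_norm M (hat_seq A) h u"
    using fourier_S_space_estimate[OF M_weight M_sm A_pos A_cond] by blast
  note lin = fourier_lincomb_S_ind[OF _ _ M_pos hat_pos]
  have "K / (2*pi) > 0" using K by simp
  with continuity_of_S_space_estimate[OF M_pos hat_pos a K est lin(1)]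
    continuity_of_S_space_estimate[OF M_pos hat_pos a _ inv_fourier_estimate[OF hat_pos shift_pos a est] lin(2)]
  show ?thesis by blast
qed

end
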